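(* Let $\mathbf{U}$ be a $p\times p$ orthogonal matrix, $\mathbf{\Lambda}$ a $p\times p$ positive semi-definite diagonal matrix, $\mathbf{\Sigma}=\mathbf{U}\mathbf{\Lambda}\mathbf{U}^{\top}$, $R\ge0$, and let $\{\boldsymbol{Z}_{i};i=1,\ldots,n\}$ be i.i.d. $p$-dimensional random vectors with $\mathbb{E}[\boldsymbol{Z}_{i}\boldsymbol{Z}_{i}^{\top}]=\mathbf{I}_{p}$ such that $(\boldsymbol{Z}_{1},\ldots,\boldsymbol{Z}_{n})$ satisfies the concentration property with some constant $K>0$. Then for all $t>0$, $\boldsymbol{\theta}\in B[R]$ and $\boldsymbol{z}=(\boldsymbol{z}_{1},\ldots,\boldsymbol{z}_{n})\in\mathbb{R}^{np}$, $$\left\|\nabla_{\boldsymbol{z}}G_{t}^{\boldsymbol{\theta}}(\boldsymbol{z})\right\|\le\sqrt{\frac{2t\|\mathbf{\Sigma}\|}{\pi n}}\left(4+\sqrt{\frac{R^{2}}{16n}\sum_{i=1}^{n}\langle\mathbf{\Lambda}\boldsymbol{z}_{i},\boldsymbol{z}_{i}\rangle}\right).$$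
   Context: $\sigma(x)=1/(1+e^{-x})$. $B[R]=\{\boldsymbol{\theta}\in\mathbb{R}^{p}:\|\boldsymbol{\theta}\|\le R\}$. $\{\boldsymbol{W}_{s};s\ge0\}$ is a $p$-dimensional standard Brownian motion started at $0$, independent of the $\boldsymbol{Z}_i$, and $\tilde{\boldsymbol{W}}_{s}^{\boldsymbol{\theta}}=\mathbf{\Lambda}^{1/2}\mathbf{U}^{\top}(\boldsymbol{\theta}+\boldsymbol{W}_{s})$. For $\boldsymbol{z}=(\boldsymbol{z}_{1},\ldots,\boldsymbol{z}_{n})\in\mathbb{R}^{np}$, $$G_{t}^{\boldsymbol{\theta}}(\boldsymbol{z})=\frac{1}{2n}\sum_{i=1}^{n}\int_{0}^{t}\mathbb{E}_{\boldsymbol{W}}\left[\sigma(1-\sigma)(\langle\tilde{\boldsymbol{W}}_{s}^{\boldsymbol{\theta}},\boldsymbol{z}_{i}\rangle)\right]\langle\mathbf{\Lambda}\boldsymbol{z}_{i},\boldsymbol{z}_{i}\rangle\,\mathrm{d}s-\frac{1}{2n}\sum_{i=1}^{n}\int_{0}^{t}\mathbb{E}_{\boldsymbol{W},\boldsymbol{Z}}\left[\sigma(1-\sigma)(\langle\tilde{\boldsymbol{W}}_{s}^{\boldsymbol{\theta}},\boldsymbol{Z}_{i}\rangle)\langle\mathbf{\Lambda}\boldsymbol{Z}_{i},\boldsymbol{Z}_{i}\rangle\right]\mathrm{d}s,$$ where $\sigma(1-\sigma)(x)=\sigma(x)(1-\sigma(x))$ (the second term does not depend on $\boldsymbol{z}$).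 $\nabla_{\boldsymbol{z}}$ is the gradient in $\boldsymbol{z}\in\mathbb{R}^{np}$, $\|\cdot\|$ the Euclidean norm on vectors and spectral norm on matrices. The concentration property with constant $K$ for an $\mathbb{R}^{d}$-valued $\boldsymbol{\zeta}$: for every $1$-Lipschitz $\varphi$, $\mathbb{E}|\varphi(\boldsymbol{\zeta})|<\infty$ and $\Pr(|\varphi(\boldsymbol{\zeta})-\mathbb{E}\varphi(\boldsymbol{\zeta})|\ge u)\le2\exp(-u^{2}/K^{2})$ for all $u>0$. *)

theory Defs
  imports "HOL-Probability.Probability"
begin

definition sigmoid :: "real \<Rightarrow> real" where
  "sigmoid x = 1 / (1 + exp (- x))"

definition sigmoid_deriv :: "real \<Rightarrow> real" where
  "sigmoid_deriv x = sigmoid x * (1 - sigmoid x)"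

text \<open>Standard Gaussian measure on R^p (the law of W_1); W_s has the law of sqrt s * g.\<close>
definition std_gauss :: "(real^'p) measure" where
  "std_gauss = density lborel
     (\<lambda>x. ennreal ((2 * pi) powr (- real CARD('p) / 2) * exp (- (norm x)\<^sup>2 / 2)))"

definition diag_sqrt :: "real^'p^'p \<Rightarrow> real^'p^'p" where
  "diag_sqrt L = (\<chi> i j. if i = j then sqrt (L $ i $ i) else 0)"

text \<open>tilde W_s^theta = Lambda^(1/2) U^T (theta + W_s), with w the value of W_s.\<close>
definition Wtilde :: "real^'p^'p \<Rightarrow> real^'p^'p \<Rightarrow> real^'p \<Rightarrow> real^'p \<Rightarrow> real^'p" where
  "Wtilde U L \<theta> w = diag_sqrt L *v (transpose U *v (\<theta> + w))"

definition G_fun ::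
  "real^'p^'p \<Rightarrow> real^'p^'p \<Rightarrow> 'a measure \<Rightarrow> ('n::finite \<Rightarrow> 'a \<Rightarrow> real^'p)
   \<Rightarrow> real \<Rightarrow> real^'p \<Rightarrow> real^'p^'n \<Rightarrow> real" where
  "G_fun U L M Z t \<theta> z =
     1 / (2 * real CARD('n)) * (\<Sum>i\<in>UNIV.
        (LINT s:{0..t}|lborel.
           (\<integral>g. sigmoid_deriv (Wtilde U L \<theta> (sqrt s *\<^sub>R g) \<bullet> z $ i) \<partial>std_gauss)
           * ((L *v z $ i) \<bullet> z $ i)))
   - 1 / (2 * real CARD('n)) * (\<Sum>i\<in>UNIV.
        (LINT s:{0..t}|lborel.
           (\<integral>\<omega>. (\<integral>g. sigmoid_deriv (Wtilde U L \<theta> (sqrt s *\<^sub>R g) \<bullet> Z i \<omega>)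
                      * ((L *v Z i \<omega>) \<bullet> Z i \<omega>) \<partial>std_gauss) \<partial>M)))"

definition concentration_property :: "'a measure \<Rightarrow> ('a \<Rightarrow> 'b::metric_space) \<Rightarrow> real \<Rightarrow> bool" where
  "concentration_property M X K \<longleftrightarrow>
     (\<forall>\<phi> :: 'b \<Rightarrow> real. (\<forall>x y. \<bar>\<phi> x - \<phi> y\<bar> \<le> dist x y) \<longrightarrow>
        integrable M (\<lambda>\<omega>. \<phi> (X \<omega>)) \<and>
        (\<forall>u>0. measure M {\<omega>\<in>space M. \<bar>\<phi> (X \<omega>) - (\<integral>\<omega>'. \<phi> (X \<omega>') \<partial>M)\<bar> \<ge> u}
                 \<le> 2 * exp (- u\<^sup>2 / K\<^sup>2)))"

end

theory Submission
  imports Defs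
begin

text \<open>
Only the first term of G depends on z. For fixed s, the inner product of the Gaussian vector
W~_s with z_i has mean c_i = <Lambda^(1/2) U^T theta, z_i> and variance s q_i, where
q_i = <Lambda z_i, z_i>; after the substitution r = s q_i the i-th summand becomes K(c_i, t q_i) with
K(c, T) = int_0^T E sigma'(c + sqrt r X) dr for a standard normal X. The gradient block in z_i is
therefore (dK/dc Lambda^(1/2) U^T theta + 2 t dK/dT Lambda z_i) / (2 n), where
dK/dc = int_0^T E sigma''(c + sqrt r X) dr and dK/dT = E sigma'(c + sqrt T X).

Averaging against a Gaussian of standard deviation sqrt r bounds a function by its L1 norm divided by
sqrt (2 pi r). As sigma' and sigma'' have L1 norms 1 and 1/2, this gives |dK/dc| <= sqrt (T / (2 pi)) and
|dK/dT| <= 1 / sqrt (2 pi T), which together with |Lambda^(1/2) U^T theta| <= sqrt |Sigma| R and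
|Lambda z_i|^2 <= |Sigma| q_i yields the bound. When q_i = 0, K is not differentiable in T at 0; but
then Lambda z_i = 0, so t q_i changes only quadratically with z_i.
\<close>

section \<open>The sigmoid and its derivatives\<close>

lemma lipschitz_on_UNIV_if_abs_deriv_le:
  fixes f f' :: "real \<Rightarrow> real"
  assumes "\<And>x. (f has_real_derivative f' x) (at x)" and "\<And>x. \<bar>f' x\<bar> \<le> B" and "0 \<le> B"
  shows "B-lipschitz_on UNIV f"
proof (rule bounded_derivative_imp_lipschitz[where f' = "\<lambda>x h. f' x * h"])
  show "(f has_derivative (\<lambda>h. f' x * h)) (at x within UNIV)" for x
    using assms(1) by (simp add: has_field_derivative_def)
  show "onorm (\<lambda>h. f' x * h) \<le> B" for x
    by (rule onorm_le) (simp add: abs_mult assms(2) mult_right_mono)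
qed (use assms(3) in auto)

lemma taylor_bound_if_lipschitz_deriv:
  fixes f f' :: "real \<Rightarrow> real"
  assumes deriv: "\<And>x. (f has_real_derivative f' x) (at x)" and lip: "C-lipschitz_on UNIV f'"
  shows "\<bar>f (a + h) - f a - h * f' a\<bar> \<le> C * h\<^sup>2"
proof -
  define g where "g u = f (a + u) - f a - u * f' a" for u
  have g_deriv: "(g has_real_derivative f' (a + u) - f' a) (at u)" for u
  proof -
    have "((\<lambda>u. f (a + u)) has_real_derivative f' (a + u) * 1) (at u)"
      by (rule DERIV_chain2[OF deriv]) (auto intro!: derivative_eq_intros)
    then show ?thesis unfolding g_def by (auto intro!: derivative_eq_intros)
  qed
  have "\<exists>z. \<bar>z\<bar> \<le> \<bar>h\<bar> \<and> g h - g 0 = h * (f' (a + z) - f' a)"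
  proof (cases rule: linorder_cases[of 0 h])
    case less
    then obtain z where "0 < z" "z < h" "g h - g 0 = (h - 0) * (f' (a + z) - f' a)"
      using MVT2[OF less, of g "\<lambda>u. f' (a + u) - f' a"] g_deriv by blast
    then show ?thesis by (intro exI[of _ z]) auto
  next
    case greater
    then obtain z where "h < z" "z < 0" "g 0 - g h = (0 - h) * (f' (a + z) - f' a)"
      using MVT2[OF greater, of g "\<lambda>u. f' (a + u) - f' a"] g_deriv by blast
    then show ?thesis by (intro exI[of _ z]) (auto simp: algebra_simps)
  qed (auto simp: g_def)
  moreover have "g 0 = 0" by (simp add: g_def)
  ultimately obtain z where z: "\<bar>z\<bar> \<le> \<bar>h\<bar>" and gh: "g h = h * (f' (a + z) - f' a)"
    by auto
  have "\<bar>f' (a + z) - f' a\<bar> \<le> C * \<bar>z\<bar>"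
    using lipschitz_onD[OF lip, of "a + z" a] by (simp add: dist_real_def)
  also have "\<dots> \<le> C * \<bar>h\<bar>"
    using z lipschitz_on_nonneg[OF lip] by (rule mult_left_mono)
  finally have "\<bar>g h\<bar> \<le> \<bar>h\<bar> * (C * \<bar>h\<bar>)"
    unfolding gh abs_mult by (rule mult_left_mono) simp
  then show ?thesis by (simp add: g_def power2_eq_square mult_ac)
qed

lemma sigmoid_gt_0: "0 < sigmoid x" and sigmoid_less_1: "sigmoid x < 1"
  unfolding sigmoid_def by (auto simp: divide_simps add_pos_pos)

lemma sigmoid_minus: "sigmoid (- x) = 1 - sigmoid x"
proof -
  have "1 + exp (-x) > 0" "1 + exp x > 0" by (simp_all add: add_pos_pos)
  then show ?thesis unfolding sigmoid_def by (simp add: field_simps exp_minus)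
qed

lemma DERIV_sigmoid: "(sigmoid has_real_derivative sigmoid_deriv x) (at x)"
proof -
  have pos: "1 + exp (-x) \<noteq> 0" by (metis add_pos_pos exp_gt_zero zero_less_one less_irrefl)
  have "((\<lambda>x. 1 / (1 + exp (-x))) has_real_derivative exp (-x) / (1 + exp (-x))\<^sup>2) (at x)"
    using pos by (auto intro!: derivative_eq_intros simp: power2_eq_square)
  moreover have "sigmoid_deriv x = exp (-x) / (1 + exp (-x))\<^sup>2"
    using pos unfolding sigmoid_deriv_def sigmoid_def by (simp add: field_simps power2_eq_square)
  ultimately show ?thesis unfolding sigmoid_def[abs_def] by simp
qed

definition sigmoid_deriv2 :: "real \<Rightarrow> real" where
  "sigmoid_deriv2 x = sigmoid_deriv x * (1 - 2 * sigmoid x)"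

lemma DERIV_sigmoid_deriv: "(sigmoid_deriv has_real_derivative sigmoid_deriv2 x) (at x)"
proof -
  have "((\<lambda>x. sigmoid x * (1 - sigmoid x)) has_real_derivative
          sigmoid_deriv x * (1 - sigmoid x) - sigmoid x * sigmoid_deriv x) (at x)"
    by (auto intro!: derivative_eq_intros DERIV_sigmoid)
  then show ?thesis
    unfolding sigmoid_deriv_def[abs_def] sigmoid_deriv2_def by (simp add: sigmoid_deriv_def algebra_simps)
qed

lemma DERIV_sigmoid_deriv2:
  "(sigmoid_deriv2 has_real_derivative
      sigmoid_deriv x * (1 - 2 * sigmoid x)\<^sup>2 - 2 * (sigmoid_deriv x)\<^sup>2) (at x)"
proof -
  have "((\<lambda>x. sigmoid_deriv x * (1 - 2 * sigmoid x)) has_real_derivative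
          sigmoid_deriv2 x * (1 - 2 * sigmoid x) - sigmoid_deriv x * (2 * sigmoid_deriv x)) (at x)"
    by (auto intro!: derivative_eq_intros DERIV_sigmoid DERIV_sigmoid_deriv)
  then show ?thesis
    unfolding sigmoid_deriv2_def[abs_def] by (simp add: sigmoid_deriv2_def power2_eq_square algebra_simps)
qed

lemma sigmoid_deriv_gt_0: "0 < sigmoid_deriv x"
  unfolding sigmoid_deriv_def using sigmoid_gt_0[of x] sigmoid_less_1[of x] by simp

lemma sigmoid_deriv_le: "sigmoid_deriv x \<le> 1/4"
proof -
  have "0 \<le> (sigmoid x - 1/2)\<^sup>2" by simp
  then show ?thesis unfolding sigmoid_deriv_def by (simp add: power2_eq_square algebra_simps)
qed

lemma abs_sigmoid_deriv_le: "\<bar>sigmoid_deriv x\<bar> \<le> 1/4"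
  using sigmoid_deriv_gt_0[of x] sigmoid_deriv_le[of x] by simp

lemma abs_one_minus_2_sigmoid_le: "\<bar>1 - 2 * sigmoid x\<bar> \<le> 1"
  using sigmoid_gt_0[of x] sigmoid_less_1[of x] by simp

lemma abs_sigmoid_deriv2_le: "\<bar>sigmoid_deriv2 x\<bar> \<le> 1/4"
proof -
  have "\<bar>sigmoid_deriv2 x\<bar> = sigmoid_deriv x * \<bar>1 - 2 * sigmoid x\<bar>"
    unfolding sigmoid_deriv2_def using sigmoid_deriv_gt_0[of x] by (simp add: abs_mult)
  also have "\<dots> \<le> 1/4 * 1"
    using sigmoid_deriv_le[of x] abs_one_minus_2_sigmoid_le[of x] sigmoid_deriv_gt_0[of x]
    by (intro mult_mono) auto
  finally show ?thesis by simp
qed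

lemma lipschitz_sigmoid_deriv: "(1/4)-lipschitz_on UNIV sigmoid_deriv"
  using lipschitz_on_UNIV_if_abs_deriv_le[OF DERIV_sigmoid_deriv abs_sigmoid_deriv2_le] by simp

lemma lipschitz_sigmoid_deriv2: "(1/4)-lipschitz_on UNIV sigmoid_deriv2"
proof (rule lipschitz_on_UNIV_if_abs_deriv_le[OF DERIV_sigmoid_deriv2])
  fix x
  define d where "d = sigmoid_deriv x"
  define e where "e = (1 - 2 * sigmoid x)\<^sup>2"
  have d: "0 < d" "d \<le> 1/4" using sigmoid_deriv_gt_0 sigmoid_deriv_le unfolding d_def by auto
  have e: "0 \<le> e" "e \<le> 1"
    unfolding e_def using abs_one_minus_2_sigmoid_le[of x] by (auto simp: abs_le_square_iff[of _ 1, simplified])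
  have "d * e \<le> 1/4" and "2 * d\<^sup>2 \<le> 1/4"
    using d e mult_mono[of d "1/4" e 1] mult_mono[of d "1/4" d "1/4"] by (auto simp: power2_eq_square)
  moreover have "0 \<le> d * e" using d e by simp
  ultimately show "\<bar>d * e - 2 * d\<^sup>2\<bar> \<le> 1/4"
    using zero_le_power2[of d] unfolding abs_le_iff by linarith
qed simp

lemma sigmoid_deriv_taylor:
  "\<bar>sigmoid_deriv (x + h) - sigmoid_deriv x - h * sigmoid_deriv2 x\<bar> \<le> h\<^sup>2 / 4"
  using taylor_bound_if_lipschitz_deriv[OF DERIV_sigmoid_deriv lipschitz_sigmoid_deriv2] by simp

lemma sigmoid_deriv_minus: "sigmoid_deriv (- x) = sigmoid_deriv x"
  unfolding sigmoid_deriv_def sigmoid_minus by simp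

lemma sigmoid_deriv2_minus: "sigmoid_deriv2 (- x) = - sigmoid_deriv2 x"
  unfolding sigmoid_deriv2_def sigmoid_deriv_minus sigmoid_minus by (simp add: algebra_simps)

lemma sigmoid_deriv2_nonpos: "0 \<le> x \<Longrightarrow> sigmoid_deriv2 x \<le> 0"
proof -
  assume "0 \<le> x"
  then have "exp (-x) \<le> 1" by simp
  then have "1/2 \<le> sigmoid x" unfolding sigmoid_def by (simp add: field_simps add_pos_pos)
  then show ?thesis unfolding sigmoid_deriv2_def using sigmoid_deriv_gt_0[of x] by (simp add: mult_nonneg_nonpos)
qed

lemma sigmoid_tendsto_at_top: "(sigmoid \<longlongrightarrow> 1) at_top"
proof -
  have "((\<lambda>x::real. exp (- x)) \<longlongrightarrow> 0) at_top"
    by (rule filterlim_compose[OF exp_at_bot filterlim_uminus_at_bot_at_top])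
  then have "((\<lambda>x::real. 1 / (1 + exp (- x))) \<longlongrightarrow> 1 / (1 + 0)) at_top"
    by (intro tendsto_intros) simp_all
  then show ?thesis unfolding sigmoid_def[abs_def] by simp
qed

lemma sigmoid_deriv_tendsto_at_top: "(sigmoid_deriv \<longlongrightarrow> 0) at_top"
proof -
  have "((\<lambda>x. sigmoid x * (1 - sigmoid x)) \<longlongrightarrow> 1 * (1 - 1)) at_top"
    by (intro tendsto_intros sigmoid_tendsto_at_top)
  then show ?thesis unfolding sigmoid_deriv_def[abs_def] by simp
qed

lemma continuous_on_sigmoid_deriv: "continuous_on A sigmoid_deriv"
  using DERIV_sigmoid_deriv by (meson DERIV_isCont continuous_at_imp_continuous_on)

lemma continuous_on_sigmoid_deriv2: "continuous_on A sigmoid_deriv2"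
  using DERIV_sigmoid_deriv2 by (meson DERIV_isCont continuous_at_imp_continuous_on)

lemma borel_measurable_sigmoid_deriv[measurable]: "sigmoid_deriv \<in> borel_measurable borel"
  by (rule borel_measurable_continuous_onI[OF continuous_on_sigmoid_deriv])

lemma borel_measurable_sigmoid_deriv2[measurable]: "sigmoid_deriv2 \<in> borel_measurable borel"
  by (rule borel_measurable_continuous_onI[OF continuous_on_sigmoid_deriv2])

lemma nn_integral_even_le:
  fixes g :: "real \<Rightarrow> real"
  assumes [measurable]: "g \<in> borel_measurable borel" and even: "\<And>x. g (- x) = g x"
  shows "(\<integral>\<^sup>+x. ennreal (g x) \<partial>lborel) \<le> 2 * (\<integral>\<^sup>+x\<in>{0..}. ennreal (g x) \<partial>lborel)"
proof -
  have "(\<integral>\<^sup>+x. ennreal (g x) \<partial>lborel) =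
      (\<integral>\<^sup>+x. ennreal (g x) * indicator {0..} x + ennreal (g x) * indicator {..<0} x \<partial>lborel)"
    by (intro nn_integral_cong) (auto simp: indicator_def)
  also have "\<dots> = (\<integral>\<^sup>+x\<in>{0..}. ennreal (g x) \<partial>lborel) + (\<integral>\<^sup>+x\<in>{..<0}. ennreal (g x) \<partial>lborel)"
    by (rule nn_integral_add) auto
  also have "(\<integral>\<^sup>+x\<in>{..<0}. ennreal (g x) \<partial>lborel) = (\<integral>\<^sup>+x\<in>{0<..}. ennreal (g x) \<partial>lborel)"
    using nn_integral_real_affine[of "\<lambda>x. ennreal (g x) * indicator {..<0} x" "-1" 0]
    by (simp add: even indicator_def)
  also have "\<dots> \<le> (\<integral>\<^sup>+x\<in>{0..}. ennreal (g x) \<partial>lborel)"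
    by (intro nn_integral_mono) (auto simp: indicator_def)
  finally show ?thesis by (simp add: add_left_mono mult_2)
qed

lemma nn_integral_sigmoid_deriv_le: "(\<integral>\<^sup>+x. ennreal (sigmoid_deriv x) \<partial>lborel) \<le> 1"
proof -
  have "(\<integral>\<^sup>+x\<in>{0..}. ennreal (sigmoid_deriv x) \<partial>lborel) = ennreal (1 - sigmoid 0)"
    by (rule nn_integral_FTC_atLeast[OF _ DERIV_sigmoid less_imp_le[OF sigmoid_deriv_gt_0]
          sigmoid_tendsto_at_top]) simp
  also have "\<dots> = ennreal (1/2)" by (simp add: sigmoid_def)
  finally show ?thesis
    using nn_integral_even_le[of sigmoid_deriv] sigmoid_deriv_minus ennreal_mult[of 2 "1/2"] by simp
qed

lemma nn_integral_abs_sigmoid_deriv2_le: "(\<integral>\<^sup>+x. ennreal \<bar>sigmoid_deriv2 x\<bar> \<partial>lborel) \<le> ennreal (1/2)"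
proof -
  have "(\<integral>\<^sup>+x\<in>{0..}. ennreal \<bar>sigmoid_deriv2 x\<bar> \<partial>lborel)
      = (\<integral>\<^sup>+x\<in>{0..}. ennreal (- sigmoid_deriv2 x) \<partial>lborel)"
    by (intro nn_integral_cong) (auto simp: indicator_def abs_if dest: sigmoid_deriv2_nonpos)
  also have "\<dots> = ennreal (0 - (- sigmoid_deriv 0))"
  proof (rule nn_integral_FTC_atLeast)
    show "((\<lambda>x. - sigmoid_deriv x) has_real_derivative - sigmoid_deriv2 x) (at x)" for x
      by (intro derivative_intros DERIV_sigmoid_deriv)
    show "((\<lambda>x. - sigmoid_deriv x) \<longlongrightarrow> 0) at_top"
      using tendsto_minus[OF sigmoid_deriv_tendsto_at_top] by simp
  qed (auto dest: sigmoid_deriv2_nonpos)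
  also have "\<dots> = ennreal (1/4)" by (simp add: sigmoid_deriv_def sigmoid_def)
  finally show ?thesis
    using nn_integral_even_le[of "\<lambda>x. \<bar>sigmoid_deriv2 x\<bar>"] sigmoid_deriv2_minus ennreal_mult[of 2 "1/4"]
    by simp
qed

section \<open>The standard Gaussian measure on \<open>real^'p\<close>\<close>

lemma PiM_std_normal_eq_density:
  assumes fin: "finite I"
  shows "PiM I (\<lambda>_. std_normal_distribution)
       = density (PiM I (\<lambda>_. lborel)) (\<lambda>f. \<Prod>i\<in>I. ennreal (std_normal_density (f i)))"
proof -
  interpret N: product_sigma_finite "\<lambda>_. std_normal_distribution"
    by (simp add: product_sigma_finite_def prob_space_imp_sigma_finite prob_space_normal_density)
  interpret L: product_sigma_finite "\<lambda>_. lborel :: real measure"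
    by (simp add: product_sigma_finite_def sigma_finite_lborel)
  show ?thesis
  proof (rule N.PiM_eqI[OF fin, symmetric])
    fix A assume "\<And>i. i \<in> I \<Longrightarrow> A i \<in> sets std_normal_distribution"
    then have A[measurable]: "\<And>i. i \<in> I \<Longrightarrow> A i \<in> sets borel" by simp
    have "Pi\<^sub>E I A \<in> sets (PiM I (\<lambda>_. lborel))"
      using A by (intro sets_PiM_I_finite fin) auto
    then have "emeasure (density (PiM I (\<lambda>_. lborel)) (\<lambda>f. \<Prod>i\<in>I. ennreal (std_normal_density (f i)))) (Pi\<^sub>E I A)
      = (\<integral>\<^sup>+f. (\<Prod>i\<in>I. ennreal (std_normal_density (f i))) * indicator (Pi\<^sub>E I A) f \<partial>PiM I (\<lambda>_. lborel))"
      by (subst emeasure_density) auto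
    also have "\<dots> = (\<integral>\<^sup>+f. (\<Prod>i\<in>I. ennreal (std_normal_density (f i)) * indicator (A i) (f i)) \<partial>PiM I (\<lambda>_. lborel))"
      by (intro nn_integral_cong) (auto simp: indicator_def PiE_iff space_PiM prod.distrib fin)
    also have "\<dots> = (\<Prod>i\<in>I. (\<integral>\<^sup>+x. ennreal (std_normal_density x) * indicator (A i) x \<partial>lborel))"
      by (intro L.product_nn_integral_prod fin) auto
    also have "\<dots> = (\<Prod>i\<in>I. emeasure std_normal_distribution (A i))"
      by (intro prod.cong refl) (simp add: emeasure_density)
    finally show "emeasure (density (PiM I (\<lambda>_. lborel)) (\<lambda>f. \<Prod>i\<in>I. ennreal (std_normal_density (f i)))) (Pi\<^sub>E I A)
      = (\<Prod>i\<in>I. emeasure std_normal_distribution (A i))" .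
  qed (simp cong: sets_PiM_cong)
qed

lemma std_gauss_density_eq_prod:
  fixes f :: "real^'p \<Rightarrow> real"
  shows "(2 * pi) powr (- real CARD('p) / 2) * exp (- (norm (\<Sum>b\<in>Basis. f b *\<^sub>R b))\<^sup>2 / 2)
       = (\<Prod>b\<in>(Basis :: (real^'p) set). std_normal_density (f b))"
proof -
  define x where "x = (\<Sum>b\<in>(Basis :: (real^'p) set). f b *\<^sub>R b)"
  have "(norm x)\<^sup>2 = (\<Sum>b\<in>Basis. (x \<bullet> b)\<^sup>2)"
    by (subst power2_norm_eq_inner, subst euclidean_inner) (simp add: power2_eq_square)
  also have "\<dots> = (\<Sum>b\<in>Basis. (f b)\<^sup>2)"
    by (intro sum.cong refl) (simp add: x_def inner_sum_left inner_Basis if_distrib cong: if_cong)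
  finally have norm_sq: "(norm x)\<^sup>2 = (\<Sum>b\<in>Basis. (f b)\<^sup>2)" .
  have "(2 * pi) powr (- real CARD('p) / 2) = ((2 * pi) powr (- 1 / 2)) powr real CARD('p)"
    by (simp add: powr_powr)
  also have "\<dots> = (1 / sqrt (2 * pi)) ^ CARD('p)"
    by (simp add: powr_minus_divide powr_half_sqrt powr_realpow)
  finally have "(2 * pi) powr (- real CARD('p) / 2) * exp (- (norm x)\<^sup>2 / 2)
      = (\<Prod>b\<in>(Basis :: (real^'p) set). 1 / sqrt (2 * pi)) * exp (\<Sum>b\<in>Basis. - (f b)\<^sup>2 / 2)"
    by (simp add: norm_sq sum_negf sum_divide_distrib)
  also have "\<dots> = (\<Prod>b\<in>Basis. std_normal_density (f b))"
    unfolding std_normal_density_def prod.distrib exp_sum[OF finite_Basis] ..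
  finally show ?thesis unfolding x_def .
qed

lemma std_gauss_eq_distr_PiM:
  "(std_gauss :: (real^'p) measure) =
     distr (PiM Basis (\<lambda>_. std_normal_distribution)) borel (\<lambda>f. \<Sum>b\<in>Basis. f b *\<^sub>R b)"
proof -
  define \<Phi> :: "(real^'p \<Rightarrow> real) \<Rightarrow> real^'p" where "\<Phi> f = (\<Sum>b\<in>Basis. f b *\<^sub>R b)" for f
  define h :: "real^'p \<Rightarrow> ennreal" where
    "h x = (2 * pi) powr (- real CARD('p) / 2) * exp (- (norm x)\<^sup>2 / 2)" for x
  have [measurable]: "h \<in> borel_measurable borel" "\<Phi> \<in> measurable (PiM Basis (\<lambda>_. lborel)) borel"
    unfolding h_def \<Phi>_def by measurable
  have h_\<Phi>: "h (\<Phi> f) = (\<Prod>b\<in>Basis. ennreal (std_normal_density (f b)))" for f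
    unfolding h_def \<Phi>_def std_gauss_density_eq_prod by (simp add: prod_ennreal)
  have "std_gauss = density (distr (PiM Basis (\<lambda>_. lborel)) borel \<Phi>) h"
    unfolding std_gauss_def h_def \<Phi>_def by (subst lborel_eq) simp
  also have "\<dots> = distr (density (PiM Basis (\<lambda>_. lborel)) (\<lambda>f. h (\<Phi> f))) borel \<Phi>"
    by (rule density_distr) auto
  also have "\<dots> = distr (PiM Basis (\<lambda>_. std_normal_distribution)) borel \<Phi>"
    unfolding h_\<Phi> by (subst PiM_std_normal_eq_density) simp_all
  finally show ?thesis unfolding \<Phi>_def .
qed

lemma distr_PiM_std_normal_component:
  assumes "finite I" "i \<in> I" "sets N = sets borel"
  shows "distr (PiM I (\<lambda>_. std_normal_distribution)) N (\<lambda>x. x i) = std_normal_distribution"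
proof -
  have "distr (PiM I (\<lambda>_. std_normal_distribution)) N (\<lambda>x. x i)
      = distr (PiM I (\<lambda>_. std_normal_distribution)) std_normal_distribution (\<lambda>x. x i)"
    by (rule distr_cong) (simp_all add: assms(3))
  also have "\<dots> = std_normal_distribution"
    using assms by (intro distr_PiM_component prob_space_normal_density) auto
  finally show ?thesis .
qed

lemma indep_vars_PiM_std_normal_components:
  assumes "finite I" "I \<noteq> {}"
  shows "prob_space.indep_vars (PiM I (\<lambda>_. std_normal_distribution)) (\<lambda>_. borel) (\<lambda>i x. x i) I"
proof -
  let ?P = "PiM I (\<lambda>_. std_normal_distribution)"
  interpret P: prob_space ?P by (intro prob_space_PiM prob_space_normal_density) simp
  have "distr ?P (PiM I (\<lambda>_. borel)) (\<lambda>x. \<lambda>i\<in>I. x i) = distr ?P (PiM I (\<lambda>_. borel)) (\<lambda>x. x)"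
    by (rule distr_cong) (auto simp: space_PiM PiE_def extensional_restrict)
  also have "\<dots> = ?P"
    by (rule distr_id2) (simp cong: sets_PiM_cong)
  also have "\<dots> = PiM I (\<lambda>i. distr ?P borel (\<lambda>x. x i))"
    using distr_PiM_std_normal_component[OF assms(1)] by (intro PiM_cong) simp_all
  finally show ?thesis
    using assms(2) by (subst P.indep_vars_iff_distr_eq_PiM') auto
qed

lemma distributed_PiM_std_normal_inner:
  fixes w :: "real^'p"
  assumes "w \<noteq> 0"
  shows "distributed (PiM Basis (\<lambda>_. std_normal_distribution)) lborel
           (\<lambda>x. \<Sum>b\<in>Basis. (b \<bullet> w) * x b) (normal_density 0 (norm w))"
proof -
  let ?P = "PiM (Basis :: (real^'p) set) (\<lambda>_. std_normal_distribution)"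
  interpret P: prob_space ?P by (intro prob_space_PiM prob_space_normal_density) simp
  \<comment> \<open>\<open>sum_indep_normal\<close> needs positive standard deviations, so drop coordinates orthogonal to w.\<close>
  define I where "I = {b\<in>(Basis :: (real^'p) set). b \<bullet> w \<noteq> 0}"
  have "finite I" "I \<subseteq> Basis" unfolding I_def by auto
  have "I \<noteq> {}"
    using assms euclidean_all_zero_iff[of w] by (auto simp: I_def inner_commute)
  have sum_I: "(\<Sum>b\<in>Basis. (b \<bullet> w) * x b) = (\<Sum>b\<in>I. (b \<bullet> w) * x b)" for x :: "real^'p \<Rightarrow> real"
    by (rule sum.mono_neutral_right) (auto simp: I_def)
  have norm_w: "sqrt (\<Sum>b\<in>I. \<bar>b \<bullet> w\<bar>\<^sup>2) = norm w"
  proof -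
    have "(\<Sum>b\<in>I. \<bar>b \<bullet> w\<bar>\<^sup>2) = (\<Sum>b\<in>Basis. (w \<bullet> b)\<^sup>2)"
      by (rule sum.mono_neutral_cong_left) (auto simp: I_def inner_commute)
    then show ?thesis by (simp add: norm_eq_sqrt_inner euclidean_inner[of w w] power2_eq_square)
  qed
  have "P.indep_vars (\<lambda>_. borel) (\<lambda>b x. (b \<bullet> w) * x b) I"
    using P.indep_vars_compose2[OF indep_vars_PiM_std_normal_components[OF finite_Basis nonempty_Basis],
        where Y="\<lambda>b y. (b \<bullet> w) * y" and N="\<lambda>_. borel"]
    by (intro P.indep_vars_subset[OF _ \<open>I \<subseteq> Basis\<close>]) auto
  moreover have "distributed ?P lborel (\<lambda>x. (b \<bullet> w) * x b) (normal_density 0 \<bar>b \<bullet> w\<bar>)"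
    if "b \<in> I" for b
  proof -
    have "distributed ?P lborel (\<lambda>x. x b) std_normal_density"
      using that \<open>I \<subseteq> Basis\<close> distr_PiM_std_normal_component[of Basis b]
      by (auto simp: distributed_def)
    from P.normal_density_affine[OF this, where \<alpha>="b \<bullet> w" and \<beta>=0] that
    show ?thesis by (simp add: I_def)
  qed
  ultimately have "distributed ?P lborel (\<lambda>x. \<Sum>b\<in>I. (b \<bullet> w) * x b)
      (normal_density 0 (sqrt (\<Sum>b\<in>I. \<bar>b \<bullet> w\<bar>\<^sup>2)))"
    using P.sum_indep_normal[OF \<open>finite I\<close> \<open>I \<noteq> {}\<close>, of _ "\<lambda>b. \<bar>b \<bullet> w\<bar>" "\<lambda>_. 0"]
    by (simp add: I_def)
  then show ?thesis unfolding norm_w sum_I .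
qed

lemma integral_std_gauss_inner:
  fixes w :: "real^'p" and f :: "real \<Rightarrow> real"
  assumes [measurable]: "f \<in> borel_measurable borel"
  shows "(\<integral>g. f (g \<bullet> w) \<partial>std_gauss) = (\<integral>x. f (norm w * x) \<partial>std_normal_distribution)"
proof -
  let ?P = "PiM (Basis :: (real^'p) set) (\<lambda>_. std_normal_distribution)"
  let ?S = "\<lambda>x. \<Sum>b\<in>(Basis :: (real^'p) set). (b \<bullet> w) * x b"
  interpret P: prob_space ?P by (intro prob_space_PiM prob_space_normal_density) simp
  interpret N: prob_space std_normal_distribution by (rule prob_space_normal_density) simp
  have "(\<integral>g. f (g \<bullet> w) \<partial>std_gauss) = (\<integral>x. f ((\<Sum>b\<in>Basis. x b *\<^sub>R b) \<bullet> w) \<partial>?P)"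
    unfolding std_gauss_eq_distr_PiM by (rule integral_distr) auto
  also have "\<dots> = (\<integral>x. f (?S x) \<partial>?P)"
    by (simp add: inner_sum_left mult.commute)
  also have "\<dots> = (\<integral>x. f (norm w * x) \<partial>std_normal_distribution)"
  proof (cases "w = 0")
    case True
    then show ?thesis using N.prob_space P.prob_space by simp
  next
    case False
    have "distributed std_normal_distribution lborel (\<lambda>x. x) std_normal_density"
      unfolding distributed_def by (simp add: distr_id2)
    from N.normal_density_affine[OF this, where \<alpha>="norm w" and \<beta>=0] False
    have "distributed std_normal_distribution lborel (\<lambda>x. norm w * x) (normal_density 0 (norm w))"
      by simp
    then have "distr ?P lborel ?S = distr std_normal_distribution lborel (\<lambda>x. norm w * x)"
      using distributed_PiM_std_normal_inner[OF False] by (simp add: distributed_def)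
    then have "(\<integral>y. f y \<partial>distr ?P lborel ?S) = (\<integral>y. f y \<partial>distr std_normal_distribution lborel (\<lambda>x. norm w * x))"
      by simp
    then show ?thesis
      by (subst (asm) (1 2) integral_distr) auto
  qed
  finally show ?thesis .
qed

section \<open>Gaussian averages\<close>

lemma integral_abs_std_normal_le_1: "(\<integral>x. \<bar>x\<bar> \<partial>std_normal_distribution) \<le> 1"
proof -
  have "(\<integral>x. \<bar>x\<bar> \<partial>std_normal_distribution) = sqrt (2 / pi)"
    using std_normal_distribution_odd_moments_abs[of 0] by simp
  also have "\<dots> \<le> 1" using pi_gt3 by simp
  finally show ?thesis .
qed

definition gauss_avg :: "(real \<Rightarrow> real) \<Rightarrow> real \<Rightarrow> real \<Rightarrow> real" where
  "gauss_avg f c a = (\<integral>x. f (c + a * x) \<partial>std_normal_distribution)"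

context
  fixes f :: "real \<Rightarrow> real" and B :: real
  assumes f_measurable[measurable]: "f \<in> borel_measurable borel" and f_bounded: "\<And>x. \<bar>f x\<bar> \<le> B"
begin

lemma integrable_std_normal_affine: "integrable std_normal_distribution (\<lambda>x. f (c + a * x))"
proof -
  interpret N: prob_space std_normal_distribution by (rule prob_space_normal_density) simp
  show ?thesis using f_bounded by (intro N.integrable_const_bound[where B=B]) auto
qed

lemma abs_gauss_avg_le: "\<bar>gauss_avg f c a\<bar> \<le> B"
proof -
  interpret N: prob_space std_normal_distribution by (rule prob_space_normal_density) simp
  have "\<bar>gauss_avg f c a\<bar> \<le> (\<integral>x. \<bar>f (c + a * x)\<bar> \<partial>std_normal_distribution)"
    unfolding gauss_avg_def using integral_norm_bound[of _ "\<lambda>x. f (c + a * x)"] by simp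
  also have "\<dots> \<le> (\<integral>x. B \<partial>std_normal_distribution)"
    using f_bounded by (intro integral_mono integrable_std_normal_affine integrable_abs) auto
  finally show ?thesis using N.prob_space by simp
qed

lemma gauss_avg_lipschitz:
  assumes lip: "C-lipschitz_on UNIV f"
  shows "\<bar>gauss_avg f c a - gauss_avg f c' a'\<bar> \<le> C * (\<bar>c - c'\<bar> + \<bar>a - a'\<bar>)"
proof -
  interpret N: prob_space std_normal_distribution by (rule prob_space_normal_density) simp
  have C: "0 \<le> C" using lipschitz_on_nonneg[OF lip] .
  have int_abs: "integrable std_normal_distribution (\<lambda>x. \<bar>x\<bar>)"
    using integrable_std_normal_distribution_moment[of 1] by (intro integrable_abs) simp
  have pointwise: "\<bar>f (c + a * x) - f (c' + a' * x)\<bar> \<le> C * \<bar>c - c'\<bar> + C * \<bar>a - a'\<bar> * \<bar>x\<bar>" for x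
  proof -
    have "\<bar>f (c + a * x) - f (c' + a' * x)\<bar> \<le> C * \<bar>(c - c') + (a - a') * x\<bar>"
      using lipschitz_onD[OF lip, of "c + a * x" "c' + a' * x"] by (simp add: dist_real_def algebra_simps)
    also have "\<dots> \<le> C * (\<bar>c - c'\<bar> + \<bar>a - a'\<bar> * \<bar>x\<bar>)"
      using C by (intro mult_left_mono) (auto simp: abs_mult intro: abs_triangle_ineq[THEN order_trans])
    finally show ?thesis by (simp add: algebra_simps)
  qed
  have "\<bar>gauss_avg f c a - gauss_avg f c' a'\<bar>
      = \<bar>\<integral>x. f (c + a * x) - f (c' + a' * x) \<partial>std_normal_distribution\<bar>"
    unfolding gauss_avg_def by (simp add: integrable_std_normal_affine)
  also have "\<dots> \<le> (\<integral>x. C * \<bar>c - c'\<bar> + C * \<bar>a - a'\<bar> * \<bar>x\<bar> \<partial>std_normal_distribution)"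
    using pointwise
    by (intro integral_abs_bound_integral Bochner_Integration.integrable_diff
        Bochner_Integration.integrable_add integrable_mult_right int_abs integrable_std_normal_affine) auto
  also have "\<dots> = C * \<bar>c - c'\<bar> + C * \<bar>a - a'\<bar> * (\<integral>x. \<bar>x\<bar> \<partial>std_normal_distribution)"
    using int_abs N.prob_space by simp
  also have "\<dots> \<le> C * \<bar>c - c'\<bar> + C * \<bar>a - a'\<bar> * 1"
    using C integral_abs_std_normal_le_1 by (intro add_left_mono mult_left_mono) auto
  finally show ?thesis by (simp add: algebra_simps)
qed

lemma continuous_on_gauss_avg_sqrt:
  assumes "C-lipschitz_on UNIV f"
  shows "continuous_on A (\<lambda>r. gauss_avg f c (sqrt r))"
proof -
  have "C-lipschitz_on UNIV (gauss_avg f c)"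
    using gauss_avg_lipschitz[OF assms, of c _ c] lipschitz_on_nonneg[OF assms]
    by (intro lipschitz_onI) (simp_all add: dist_real_def)
  then have "continuous_on UNIV (gauss_avg f c)" by (rule lipschitz_on_continuous_on)
  then show ?thesis
    by (rule continuous_on_compose2[of UNIV]) (auto intro!: continuous_on_real_sqrt)
qed

end

lemma abs_gauss_avg_le_L1:
  fixes h :: "real \<Rightarrow> real"
  assumes [measurable]: "h \<in> borel_measurable borel"
    and L1: "(\<integral>\<^sup>+x. ennreal \<bar>h x\<bar> \<partial>lborel) \<le> ennreal A" and "0 \<le> A" and "0 < a"
  shows "\<bar>gauss_avg h c a\<bar> \<le> A / (a * sqrt (2 * pi))"
proof -
  have "\<bar>gauss_avg h c a\<bar> \<le> (\<integral>x. \<bar>h (c + a * x)\<bar> \<partial>std_normal_distribution)"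
    unfolding gauss_avg_def using integral_norm_bound[of _ "\<lambda>x. h (c + a * x)"] by simp
  also have "\<dots> = enn2real (\<integral>\<^sup>+x. \<bar>h (c + a * x)\<bar> \<partial>std_normal_distribution)"
    by (rule integral_eq_nn_integral) auto
  also have "\<dots> \<le> A / (a * sqrt (2 * pi))"
  proof (rule enn2real_leI)
    have "(\<integral>\<^sup>+x. \<bar>h (c + a * x)\<bar> \<partial>lborel) = ennreal (1 / a) * (\<integral>\<^sup>+x. \<bar>h x\<bar> \<partial>lborel)"
      using nn_integral_real_affine[of "\<lambda>x. ennreal \<bar>h (c + a * x)\<bar>" "1 / a" "- c / a"] \<open>0 < a\<close>
      by (simp add: field_simps)
    then have affine: "(\<integral>\<^sup>+x. \<bar>h (c + a * x)\<bar> \<partial>lborel) \<le> ennreal (1 / a) * ennreal A"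
      using L1 by (simp add: mult_left_mono)
    have "(\<integral>\<^sup>+x. \<bar>h (c + a * x)\<bar> \<partial>std_normal_distribution)
        = (\<integral>\<^sup>+x. ennreal (std_normal_density x) * \<bar>h (c + a * x)\<bar> \<partial>lborel)"
      by (rule nn_integral_density) auto
    also have "\<dots> \<le> (\<integral>\<^sup>+x. ennreal (1 / sqrt (2 * pi)) * \<bar>h (c + a * x)\<bar> \<partial>lborel)"
      by (intro nn_integral_mono mult_right_mono ennreal_leI) (auto simp: std_normal_density_def divide_right_mono)
    also have "\<dots> = ennreal (1 / sqrt (2 * pi)) * (\<integral>\<^sup>+x. \<bar>h (c + a * x)\<bar> \<partial>lborel)"
      by (rule nn_integral_cmult) auto
    also have "\<dots> \<le> ennreal (1 / sqrt (2 * pi)) * (ennreal (1 / a) * ennreal A)"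
      using affine by (rule mult_left_mono) simp
    also have "\<dots> = ennreal (A / (a * sqrt (2 * pi)))"
      using \<open>0 < a\<close> \<open>0 \<le> A\<close> by (simp add: ennreal_mult[symmetric])
    finally show "(\<integral>\<^sup>+x. \<bar>h (c + a * x)\<bar> \<partial>std_normal_distribution) \<le> ennreal (A / (a * sqrt (2 * pi)))" .
  qed (use \<open>0 \<le> A\<close> \<open>0 < a\<close> in simp)
  finally show ?thesis .
qed

lemma abs_gauss_avg_taylor_le:
  fixes f f' :: "real \<Rightarrow> real"
  assumes [measurable]: "f \<in> borel_measurable borel" "f' \<in> borel_measurable borel"
    and "\<And>x. \<bar>f x\<bar> \<le> B" "\<And>x. \<bar>f' x\<bar> \<le> B'"
    and remainder: "\<And>y. \<bar>f (y + h) - f y - h * f' y\<bar> \<le> K"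
  shows "\<bar>gauss_avg f (c + h) a - gauss_avg f c a - h * gauss_avg f' c a\<bar> \<le> K"
proof -
  interpret N: prob_space std_normal_distribution by (rule prob_space_normal_density) simp
  have int: "integrable std_normal_distribution (\<lambda>x. f (c' + a * x))"
    "integrable std_normal_distribution (\<lambda>x. f' (c' + a * x))" for c'
    using assms by (auto intro!: integrable_std_normal_affine)
  have "gauss_avg f (c + h) a - gauss_avg f c a - h * gauss_avg f' c a
      = (\<integral>x. f (c + h + a * x) - f (c + a * x) - h * f' (c + a * x) \<partial>std_normal_distribution)"
    unfolding gauss_avg_def
    by (simp add: Bochner_Integration.integral_diff[OF Bochner_Integration.integrable_diff[OF int(1) int(1)]
          integrable_mult_right[OF int(2)]] Bochner_Integration.integral_diff[OF int(1) int(1)])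
  also have "\<bar>\<dots>\<bar> \<le> (\<integral>x. K \<partial>std_normal_distribution)"
    using remainder[of "c + a * x" for x]
    by (intro integral_abs_bound_integral Bochner_Integration.integrable_diff integrable_mult_right int)
      (auto simp: add_ac)
  finally show ?thesis using N.prob_space by simp
qed

section \<open>Time integrals of Gaussian averages of the sigmoid derivatives\<close>

lemma abs_integral_linearization_le:
  fixes k :: "real \<Rightarrow> real"
  assumes cont: "continuous_on {0..} k"
    and lip: "\<And>r. 0 \<le> r \<Longrightarrow> \<bar>k r - k T0\<bar> \<le> M * \<bar>r - T0\<bar>"
    and "0 \<le> M" "0 \<le> T0" "0 \<le> T"
  shows "\<bar>integral {0..T} k - integral {0..T0} k - (T - T0) * k T0\<bar> \<le> M * (T - T0)\<^sup>2"
proof -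
  have int: "k integrable_on {a..b}" if "0 \<le> a" for a b
    using that by (intro integrable_continuous_interval continuous_on_subset[OF cont]) auto
  have bound: "\<bar>integral {a..b} k - (b - a) * k T0\<bar> \<le> M * (b - a)\<^sup>2"
    if ab: "0 \<le> a" "a \<le> b" "T0 \<in> {a..b}" for a b
  proof -
    have "integral {a..b} k - (b - a) * k T0 = integral {a..b} (\<lambda>r. k r - k T0)"
      using ab int by (subst integral_diff) auto
    also have "norm \<dots> \<le> M * (b - a) * (b - a)"
    proof (rule integral_bound[OF ab(2)])
      show "continuous_on {a..b} (\<lambda>r. k r - k T0)"
        using ab by (intro continuous_intros continuous_on_subset[OF cont]) auto
      fix r assume "r \<in> {a..b}"
      then have "\<bar>r - T0\<bar> \<le> b - a" "0 \<le> r" using ab by auto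
      then show "norm (k r - k T0) \<le> M * (b - a)"
        using lip[of r] mult_left_mono[of _ _ M] \<open>0 \<le> M\<close> by fastforce
    qed
    finally show ?thesis by (simp add: power2_eq_square mult.assoc)
  qed
  show ?thesis
  proof (cases "T0 \<le> T")
    case True
    then have "integral {0..T} k = integral {0..T0} k + integral {T0..T} k"
      using \<open>0 \<le> T0\<close> by (intro Henstock_Kurzweil_Integration.integral_combine[symmetric] int) auto
    then show ?thesis using bound[of T0 T] True \<open>0 \<le> T0\<close> by simp
  next
    case False
    then have "integral {0..T0} k = integral {0..T} k + integral {T..T0} k"
      using \<open>0 \<le> T\<close> by (intro Henstock_Kurzweil_Integration.integral_combine[symmetric] int) auto
    then have "integral {0..T} k - integral {0..T0} k - (T - T0) * k T0
        = - (integral {T..T0} k - (T0 - T) * k T0)"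
      by (simp add: algebra_simps)
    then show ?thesis
      using bound[of T T0] False \<open>0 \<le> T\<close> by (simp add: power2_commute[of T])
  qed
qed

lemma abs_sqrt_diff_le:
  assumes "0 < T0" "0 \<le> r"
  shows "\<bar>sqrt r - sqrt T0\<bar> \<le> \<bar>r - T0\<bar> / sqrt T0"
proof -
  have "r - T0 = (sqrt r - sqrt T0) * (sqrt r + sqrt T0)"
    using assms by (simp add: algebra_simps)
  then have "\<bar>r - T0\<bar> = \<bar>sqrt r - sqrt T0\<bar> * (sqrt r + sqrt T0)"
    using assms by (simp add: abs_mult)
  also have "\<dots> \<ge> \<bar>sqrt r - sqrt T0\<bar> * sqrt T0"
    using assms by (intro mult_left_mono) auto
  finally show ?thesis using assms by (simp add: field_simps)
qed

lemma has_integral_inverse_sqrt: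
  assumes "0 \<le> T"
  shows "((\<lambda>r. c / (2 * sqrt r)) has_integral c * sqrt T) {0..T}"
proof -
  have "((\<lambda>r. c / (2 * sqrt r)) has_integral c * sqrt T - c * sqrt 0) {0..T}"
  proof (rule fundamental_theorem_of_calculus_interior[OF assms])
    show "continuous_on {0..T} (\<lambda>r. c * sqrt r)" by (intro continuous_intros)
    show "((\<lambda>r. c * sqrt r) has_vector_derivative c / (2 * sqrt r)) (at r)" if "r \<in> {0<..<T}" for r
    proof -
      have "(sqrt has_real_derivative inverse (sqrt r) / 2) (at r)"
        using that by (intro DERIV_real_sqrt) simp
      from DERIV_cmult[OF this, of c] show ?thesis
        by (simp add: has_real_derivative_iff_has_vector_derivative[symmetric] field_simps)
    qed
  qed
  then show ?thesis by simp
qed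

text \<open>\<open>sd_avg_int\<close> is the function K of the proof idea; \<open>sd2_avg_int\<close> and \<open>sd_avg\<close> are its partial
  derivatives in c and in T.\<close>

definition sd_avg :: "real \<Rightarrow> real \<Rightarrow> real" where
  "sd_avg c r = gauss_avg sigmoid_deriv c (sqrt r)"

definition sd2_avg :: "real \<Rightarrow> real \<Rightarrow> real" where
  "sd2_avg c r = gauss_avg sigmoid_deriv2 c (sqrt r)"

definition sd_avg_int :: "real \<Rightarrow> real \<Rightarrow> real" where
  "sd_avg_int c T = integral {0..T} (sd_avg c)"

definition sd2_avg_int :: "real \<Rightarrow> real \<Rightarrow> real" where
  "sd2_avg_int c T = integral {0..T} (sd2_avg c)"

lemma continuous_on_sd_avg: "continuous_on A (sd_avg c)"
  unfolding sd_avg_def[abs_def]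
  by (rule continuous_on_gauss_avg_sqrt[OF _ abs_sigmoid_deriv_le lipschitz_sigmoid_deriv]) simp

lemma continuous_on_sd2_avg: "continuous_on A (sd2_avg c)"
  unfolding sd2_avg_def[abs_def]
  by (rule continuous_on_gauss_avg_sqrt[OF _ abs_sigmoid_deriv2_le lipschitz_sigmoid_deriv2]) simp

lemma sd_avg_integrable_on: "sd_avg c integrable_on {a..b}"
  by (rule integrable_continuous_interval[OF continuous_on_sd_avg])

lemma sd2_avg_integrable_on: "sd2_avg c integrable_on {a..b}"
  by (rule integrable_continuous_interval[OF continuous_on_sd2_avg])

lemma abs_sd_avg_le: "\<bar>sd_avg c r\<bar> \<le> 1/4"
  unfolding sd_avg_def by (rule abs_gauss_avg_le[OF _ abs_sigmoid_deriv_le]) simp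

lemma abs_sd2_avg_le: "\<bar>sd2_avg c r\<bar> \<le> 1/4"
  unfolding sd2_avg_def by (rule abs_gauss_avg_le[OF _ abs_sigmoid_deriv2_le]) simp

lemma abs_sd_avg_le_inverse_sqrt: "0 < r \<Longrightarrow> \<bar>sd_avg c r\<bar> \<le> 1 / (sqrt r * sqrt (2 * pi))"
  unfolding sd_avg_def
  using abs_gauss_avg_le_L1[of sigmoid_deriv 1 "sqrt r" c] nn_integral_sigmoid_deriv_le sigmoid_deriv_gt_0
  by (simp add: less_imp_le)

lemma abs_sd2_avg_le_inverse_sqrt: "0 < r \<Longrightarrow> \<bar>sd2_avg c r\<bar> \<le> 1 / (2 * sqrt r * sqrt (2 * pi))"
  unfolding sd2_avg_def
  using abs_gauss_avg_le_L1[of sigmoid_deriv2 "1/2" "sqrt r" c] nn_integral_abs_sigmoid_deriv2_le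
  by simp

lemma abs_sd_avg_diff_le:
  assumes "0 < T0" "0 \<le> r"
  shows "\<bar>sd_avg c r - sd_avg c' T0\<bar> \<le> 1/4 * (\<bar>c - c'\<bar> + \<bar>r - T0\<bar> / sqrt T0)"
proof -
  have "\<bar>sd_avg c r - sd_avg c' T0\<bar> \<le> 1/4 * (\<bar>c - c'\<bar> + \<bar>sqrt r - sqrt T0\<bar>)"
    unfolding sd_avg_def
    by (rule gauss_avg_lipschitz[OF _ abs_sigmoid_deriv_le lipschitz_sigmoid_deriv]) simp
  also have "\<dots> \<le> 1/4 * (\<bar>c - c'\<bar> + \<bar>r - T0\<bar> / sqrt T0)"
    using abs_sqrt_diff_le[OF assms] by (intro mult_left_mono add_left_mono) auto
  finally show ?thesis .
qed

lemma abs_sd_avg_int_le: "0 \<le> T \<Longrightarrow> \<bar>sd_avg_int c T\<bar> \<le> T / 4"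
  using integral_bound[of 0 T "sd_avg c" "1/4"] continuous_on_sd_avg abs_sd_avg_le
  unfolding sd_avg_int_def by simp

lemma abs_sd2_avg_int_le: "0 \<le> T \<Longrightarrow> \<bar>sd2_avg_int c T\<bar> \<le> sqrt T / sqrt (2 * pi)"
proof -
  assume "0 \<le> T"
  \<comment> \<open>At r = 0 the decay bound degenerates to 1 / 0 = 0, so g takes the uniform bound there.\<close>
  define g where "g r = (if r = 0 then 1/4 else (1 / sqrt (2 * pi)) / (2 * sqrt r))" for r :: real
  have g_int: "(g has_integral (1 / sqrt (2 * pi)) * sqrt T) {0..T}"
    by (rule has_integral_spike_finite[where S="{0}", OF _ _ has_integral_inverse_sqrt[OF \<open>0 \<le> T\<close>]])
      (auto simp: g_def)
  have "\<bar>sd2_avg_int c T\<bar> \<le> integral {0..T} g"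
    unfolding sd2_avg_int_def real_norm_def[symmetric]
  proof (rule integral_norm_bound_integral[OF sd2_avg_integrable_on])
    show "g integrable_on {0..T}" using g_int by blast
    show "norm (sd2_avg c r) \<le> g r" if "r \<in> {0..T}" for r
      using that abs_sd2_avg_le[of c r] abs_sd2_avg_le_inverse_sqrt[of r c] by (auto simp: g_def mult_ac)
  qed
  also have "\<dots> = sqrt T / sqrt (2 * pi)" using g_int by (simp add: integral_unique)
  finally show ?thesis .
qed

lemma sd_avg_int_taylor_c:
  assumes "0 \<le> T"
  shows "\<bar>sd_avg_int (c + h) T - sd_avg_int c T - h * sd2_avg_int c T\<bar> \<le> T * h\<^sup>2 / 4"
proof -
  have pointwise: "\<bar>sd_avg (c + h) r - sd_avg c r - h * sd2_avg c r\<bar> \<le> h\<^sup>2 / 4" for r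
    unfolding sd_avg_def sd2_avg_def
    by (intro abs_gauss_avg_taylor_le[where B="1/4" and B'="1/4"] borel_measurable_sigmoid_deriv
        borel_measurable_sigmoid_deriv2 abs_sigmoid_deriv_le abs_sigmoid_deriv2_le sigmoid_deriv_taylor)
  have "sd_avg_int (c + h) T - sd_avg_int c T - h * sd2_avg_int c T
      = integral {0..T} (\<lambda>r. sd_avg (c + h) r - sd_avg c r - h * sd2_avg c r)"
    unfolding sd_avg_int_def sd2_avg_int_def
    by (simp add: integral_diff sd_avg_integrable_on sd2_avg_integrable_on integrable_diff
        integrable_on_mult_right)
  also have "norm \<dots> \<le> h\<^sup>2 / 4 * (T - 0)"
    using pointwise
    by (intro integral_bound[OF assms] continuous_intros continuous_on_sd_avg continuous_on_sd2_avg) simp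
  finally show ?thesis by (simp add: mult.commute)
qed

lemma sd_avg_int_taylor_T:
  assumes "0 < T0" "0 \<le> T"
  shows "\<bar>sd_avg_int c T - sd_avg_int c T0 - (T - T0) * sd_avg c T0\<bar> \<le> (T - T0)\<^sup>2 / (4 * sqrt T0)"
proof -
  have lip: "\<bar>sd_avg c r - sd_avg c T0\<bar> \<le> 1 / (4 * sqrt T0) * \<bar>r - T0\<bar>" if "0 \<le> r" for r
    using abs_sd_avg_diff_le[OF \<open>0 < T0\<close> that, of c c] by simp
  have "\<bar>integral {0..T} (sd_avg c) - integral {0..T0} (sd_avg c) - (T - T0) * sd_avg c T0\<bar>
      \<le> 1 / (4 * sqrt T0) * (T - T0)\<^sup>2"
    by (rule abs_integral_linearization_le[OF continuous_on_sd_avg lip]) (use assms in auto)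
  then show ?thesis unfolding sd_avg_int_def by simp
qed

lemma sd_avg_int_taylor:
  assumes "0 < T0" "0 \<le> T"
  shows "\<bar>sd_avg_int c T - sd_avg_int c0 T0 - (c - c0) * sd2_avg_int c0 T0 - (T - T0) * sd_avg c0 T0\<bar>
    \<le> (T - T0)\<^sup>2 / (4 * sqrt T0) + \<bar>T - T0\<bar> * \<bar>c - c0\<bar> / 4 + T0 * (c - c0)\<^sup>2 / 4"
proof -
  define X1 where "X1 = sd_avg_int c T - sd_avg_int c T0 - (T - T0) * sd_avg c T0"
  define X2 where "X2 = (T - T0) * (sd_avg c T0 - sd_avg c0 T0)"
  define X3 where "X3 = sd_avg_int c T0 - sd_avg_int c0 T0 - (c - c0) * sd2_avg_int c0 T0"
  have "\<bar>X1\<bar> \<le> (T - T0)\<^sup>2 / (4 * sqrt T0)"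
    unfolding X1_def by (rule sd_avg_int_taylor_T[OF assms])
  moreover have "\<bar>X2\<bar> \<le> \<bar>T - T0\<bar> * \<bar>c - c0\<bar> / 4"
  proof -
    have "\<bar>sd_avg c T0 - sd_avg c0 T0\<bar> \<le> \<bar>c - c0\<bar> / 4"
      using abs_sd_avg_diff_le[OF \<open>0 < T0\<close>, of T0 c c0] \<open>0 < T0\<close> by simp
    then have "\<bar>T - T0\<bar> * \<bar>sd_avg c T0 - sd_avg c0 T0\<bar> \<le> \<bar>T - T0\<bar> * (\<bar>c - c0\<bar> / 4)"
      by (rule mult_left_mono) simp
    then show ?thesis unfolding X2_def abs_mult by simp
  qed
  moreover have "\<bar>X3\<bar> \<le> T0 * (c - c0)\<^sup>2 / 4"
    unfolding X3_def using sd_avg_int_taylor_c[of T0 c0 "c - c0"] \<open>0 < T0\<close> by simp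
  moreover have "sd_avg_int c T - sd_avg_int c0 T0 - (c - c0) * sd2_avg_int c0 T0 - (T - T0) * sd_avg c0 T0
      = X1 + X2 + X3"
    unfolding X1_def X2_def X3_def by (simp add: algebra_simps)
  ultimately show ?thesis by linarith
qed

section \<open>The first term of G and its gradient\<close>

lemma integral_stretch_atLeastAtMost:
  fixes f :: "real \<Rightarrow> real"
  assumes "0 \<le> q"
  shows "integral {0..t} (\<lambda>s. f (s * q) * q) = integral {0..t * q} f"
proof (cases "q = 0")
  case False
  then have "0 < q" using assms by simp
  then show ?thesis
    using integral_stretch_real[of q 0 "t * q" f] by (simp add: mult.commute)
qed simp

lemma has_derivative_if_remainder_quadratic:
  fixes f :: "'a::real_normed_vector \<Rightarrow> real"
  assumes "bounded_linear D"
    and remainder: "\<And>y. norm (y - x) < 1 \<Longrightarrow> \<bar>f y - f x - D (y - x)\<bar> \<le> C * (norm (y - x))\<^sup>2"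
  shows "(f has_derivative D) (at x)"
  unfolding has_derivative_iff_norm
proof (intro conjI assms)
  show "((\<lambda>y. norm (f y - f x - D (y - x)) / norm (y - x)) \<longlongrightarrow> 0) (at x)"
  proof (rule tendsto_sandwich[where f="\<lambda>_. 0" and h="\<lambda>y. \<bar>C\<bar> * norm (y - x)"])
    have "\<forall>\<^sub>F y in at x. y \<in> ball x 1" by (rule eventually_at_in_open') auto
    then show "\<forall>\<^sub>F y in at x. norm (f y - f x - D (y - x)) / norm (y - x) \<le> \<bar>C\<bar> * norm (y - x)"
    proof (rule eventually_mono)
      fix y assume "y \<in> ball x 1"
      then have "\<bar>f y - f x - D (y - x)\<bar> \<le> \<bar>C\<bar> * (norm (y - x))\<^sup>2"
        using remainder[of y] abs_ge_self[of C] by (simp add: dist_norm norm_minus_commute)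
          (meson mult_right_mono order_trans zero_le_power2)
      then show "norm (f y - f x - D (y - x)) / norm (y - x) \<le> \<bar>C\<bar> * norm (y - x)"
        by (cases "y = x") (auto simp: divide_le_eq power2_eq_square mult.assoc)
    qed
    have "((\<lambda>y. \<bar>C\<bar> * norm (y - x)) \<longlongrightarrow> \<bar>C\<bar> * norm (x - x)) (at x)"
      by (intro tendsto_intros)
    then show "((\<lambda>y. \<bar>C\<bar> * norm (y - x)) \<longlongrightarrow> 0) (at x)" by simp
  qed auto
qed

lemma norm_vec_le_sqrt_sum:
  fixes g :: "'a::real_normed_vector^'n"
  assumes "\<And>i. norm (g $ i) \<le> \<alpha> * sqrt (q i) + \<beta>" and "\<And>i. 0 \<le> q i" and "0 \<le> \<alpha>" and "0 \<le> \<beta>"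
  shows "norm g \<le> \<alpha> * sqrt (\<Sum>i\<in>UNIV. q i) + sqrt (CARD('n)) * \<beta>"
proof -
  have "norm g = L2_set (\<lambda>i. norm (g $ i)) UNIV" by (simp add: norm_vec_def)
  also have "\<dots> \<le> L2_set (\<lambda>i. \<alpha> * sqrt (q i) + \<beta>) UNIV"
    using assms by (intro L2_set_mono) auto
  also have "\<dots> \<le> L2_set (\<lambda>i. \<alpha> * sqrt (q i)) UNIV + L2_set (\<lambda>i. \<beta>) (UNIV :: 'n set)"
    by (rule L2_set_triangle_ineq)
  also have "L2_set (\<lambda>i. \<alpha> * sqrt (q i)) UNIV = \<alpha> * L2_set (\<lambda>i. sqrt (q i)) UNIV"
    by (rule L2_set_right_distrib[OF \<open>0 \<le> \<alpha>\<close>, symmetric])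
  also have "L2_set (\<lambda>i. sqrt (q i)) UNIV = sqrt (\<Sum>i\<in>UNIV. q i)"
    using assms(2) by (simp add: L2_set_def)
  also have "L2_set (\<lambda>i. \<beta>) (UNIV :: 'n set) = sqrt (CARD('n)) * \<beta>"
    using assms(4) by (simp add: L2_set_constant)
  finally show ?thesis .
qed

lemma matrix_vector_mul_inner_transpose: "((A :: real^'n^'m) *v x) \<bullet> y = x \<bullet> (transpose A *v y)"
  by (metis dot_lmul_matrix vector_transpose_matrix)

lemma norm_orthogonal_matrix_vector_mul:
  assumes "orthogonal_matrix (U :: real^'n^'n)"
  shows "norm (U *v x) = norm x"
  using assms orthogonal_transformation orthogonal_transformation_matrix
  by (metis matrix_of_matrix_vector_mul matrix_vector_mul_linear)

lemma transpose_diag_sqrt: "transpose (diag_sqrt L) = diag_sqrt L"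
  by (simp add: diag_sqrt_def transpose_def vec_eq_iff)

definition quad_form :: "real^'p^'p \<Rightarrow> real^'p \<Rightarrow> real" where
  "quad_form L y = (L *v y) \<bullet> y"

definition G_grad :: "real^'p^'p \<Rightarrow> real^'p^'p \<Rightarrow> real \<Rightarrow> real^'p \<Rightarrow> real^'p^'n::finite \<Rightarrow> real^'p^'n" where
  "G_grad U L t \<theta> z = (\<chi> i.
     (sd2_avg_int (Wtilde U L \<theta> 0 \<bullet> z $ i) (t * quad_form L (z $ i)) *\<^sub>R Wtilde U L \<theta> 0
      + (2 * t * sd_avg (Wtilde U L \<theta> 0 \<bullet> z $ i) (t * quad_form L (z $ i))) *\<^sub>R (L *v z $ i))
     /\<^sub>R (2 * CARD('n)))"

locale eigendecomposition =
  fixes U L :: "real^'p::finite^'p"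
  assumes orthogonal: "orthogonal_matrix U"
    and diagonal: "\<forall>i j. i \<noteq> j \<longrightarrow> L $ i $ j = 0"
    and nonneg: "\<forall>i. L $ i $ i \<ge> 0"
begin

definition op_norm :: real where
  "op_norm = onorm (\<lambda>x. (U ** L ** transpose U) *v x)"

lemma op_norm_nonneg: "0 \<le> op_norm"
  unfolding op_norm_def by (rule onorm_pos_le) simp

lemma norm_L_le: "norm (L *v v) \<le> op_norm * norm v"
proof -
  have UU: "transpose U ** U = mat 1" using orthogonal by (simp add: orthogonal_matrix)
  have "L *v v = transpose U *v ((U ** L ** transpose U) *v (U *v v))"
    by (simp add: matrix_vector_mul_assoc matrix_mul_assoc UU)
       (simp add: matrix_mul_assoc[symmetric] UU)
  then have "norm (L *v v) = norm ((U ** L ** transpose U) *v (U *v v))"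
    using norm_orthogonal_matrix_vector_mul[of "transpose U"] orthogonal by simp
  also have "\<dots> \<le> op_norm * norm (U *v v)"
    unfolding op_norm_def by (rule onorm) simp
  finally show ?thesis using norm_orthogonal_matrix_vector_mul[OF orthogonal] by simp
qed

lemma L_mult_component: "(L *v y) $ j = L $ j $ j * y $ j"
proof -
  have "(L *v y) $ j = (\<Sum>k\<in>UNIV. L $ j $ k * y $ k)" by (simp add: matrix_vector_mult_def)
  also have "\<dots> = L $ j $ j * y $ j"
    using diagonal by (subst sum.remove[of _ j]) auto
  finally show ?thesis .
qed

lemma diag_le_op_norm: "L $ j $ j \<le> op_norm"
proof -
  have "L $ j $ j = (L *v axis j 1) $ j" by (simp add: L_mult_component)
  also have "\<dots> \<le> norm (L *v axis j 1)" using component_le_norm_cart by (rule abs_le_D1)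
  also have "\<dots> \<le> op_norm" using norm_L_le[of "axis j 1"] by simp
  finally show ?thesis .
qed

lemma quad_form_eq_sum: "quad_form L y = (\<Sum>j\<in>UNIV. L $ j $ j * (y $ j)\<^sup>2)"
  unfolding quad_form_def inner_vec_def by (simp add: L_mult_component power2_eq_square mult.assoc)

lemma quad_form_nonneg: "0 \<le> quad_form L y"
  unfolding quad_form_eq_sum using nonneg by (intro sum_nonneg) simp

lemma quad_form_add: "quad_form L (y + h) = quad_form L y + 2 * ((L *v y) \<bullet> h) + quad_form L h"
proof -
  have "(L *v h) \<bullet> y = (L *v y) \<bullet> h"
    unfolding inner_vec_def by (simp add: L_mult_component algebra_simps)
  then show ?thesis
    unfolding quad_form_def by (simp add: matrix_vector_right_distrib inner_add_left inner_add_right)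
qed

lemma quad_form_le: "quad_form L v \<le> op_norm * (norm v)\<^sup>2"
proof -
  have "quad_form L v \<le> norm (L *v v) * norm v"
    unfolding quad_form_def by (rule norm_cauchy_schwarz)
  also have "\<dots> \<le> op_norm * norm v * norm v"
    by (intro mult_right_mono norm_L_le) simp
  finally show ?thesis by (simp add: power2_eq_square mult.assoc)
qed

lemma norm_L_sq_le: "(norm (L *v y))\<^sup>2 \<le> op_norm * quad_form L y"
proof -
  have "(norm (L *v y))\<^sup>2 = (\<Sum>j\<in>UNIV. L $ j $ j * (L $ j $ j * (y $ j)\<^sup>2))"
    unfolding power2_norm_eq_inner inner_vec_def L_mult_component
    by (simp add: power2_eq_square algebra_simps)
  also have "\<dots> \<le> (\<Sum>j\<in>UNIV. op_norm * (L $ j $ j * (y $ j)\<^sup>2))"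
    using nonneg diag_le_op_norm by (intro sum_mono mult_right_mono) auto
  also have "\<dots> = op_norm * quad_form L y"
    by (simp add: quad_form_eq_sum sum_distrib_left)
  finally show ?thesis .
qed

lemma norm_L_le_sqrt_quad_form: "norm (L *v y) \<le> sqrt op_norm * sqrt (quad_form L y)"
proof (rule power2_le_imp_le)
  show "(norm (L *v y))\<^sup>2 \<le> (sqrt op_norm * sqrt (quad_form L y))\<^sup>2"
    using norm_L_sq_le[of y] op_norm_nonneg quad_form_nonneg[of y] by (simp add: power_mult_distrib)
qed (simp add: op_norm_nonneg quad_form_nonneg)

lemma norm_diag_sqrt_sq: "(norm (diag_sqrt L *v y))\<^sup>2 = quad_form L y"
proof -
  have "(diag_sqrt L *v y) $ j = sqrt (L $ j $ j) * y $ j" for j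
    unfolding matrix_vector_mult_def diag_sqrt_def by (simp add: if_distrib[where f="\<lambda>a. a * _"] cong: if_cong)
  then show ?thesis
    unfolding quad_form_eq_sum power2_norm_eq_inner inner_vec_def
    using nonneg by (intro sum.cong refl) (simp add: power2_eq_square algebra_simps)
qed

lemma Wtilde_inner:
  "Wtilde U L \<theta> w \<bullet> y = Wtilde U L \<theta> 0 \<bullet> y + w \<bullet> (U *v (diag_sqrt L *v y))"
  unfolding Wtilde_def
  by (simp add: matrix_vector_mul_inner_transpose transpose_diag_sqrt matrix_vector_right_distrib
      inner_add_left dot_lmul_matrix)

lemma norm_Wtilde_0_le: "norm (Wtilde U L \<theta> 0) \<le> sqrt op_norm * norm \<theta>"
proof (rule power2_le_imp_le)
  have "(norm (Wtilde U L \<theta> 0))\<^sup>2 = quad_form L (transpose U *v \<theta>)"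
    unfolding Wtilde_def by (simp add: norm_diag_sqrt_sq)
  also have "\<dots> \<le> op_norm * (norm (transpose U *v \<theta>))\<^sup>2" by (rule quad_form_le)
  also have "\<dots> = (sqrt op_norm * norm \<theta>)\<^sup>2"
    using norm_orthogonal_matrix_vector_mul[of "transpose U" \<theta>] orthogonal op_norm_nonneg
    by (simp add: power_mult_distrib)
  finally show "(norm (Wtilde U L \<theta> 0))\<^sup>2 \<le> (sqrt op_norm * norm \<theta>)\<^sup>2" .
qed (simp add: op_norm_nonneg)

lemma integral_sigmoid_deriv_Wtilde:
  assumes "0 \<le> s"
  shows "(\<integral>g. sigmoid_deriv (Wtilde U L \<theta> (sqrt s *\<^sub>R g) \<bullet> y) \<partial>std_gauss)
       = sd_avg (Wtilde U L \<theta> 0 \<bullet> y) (s * quad_form L y)"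
proof -
  define c where "c = Wtilde U L \<theta> 0 \<bullet> y"
  define w where "w = U *v (diag_sqrt L *v y)"
  have norm_w: "norm w = sqrt (quad_form L y)"
    unfolding w_def norm_orthogonal_matrix_vector_mul[OF orthogonal] norm_diag_sqrt_sq[symmetric] by simp
  have "Wtilde U L \<theta> (sqrt s *\<^sub>R g) \<bullet> y = c + sqrt s * (g \<bullet> w)" for g
    unfolding c_def w_def by (subst Wtilde_inner) simp
  then have "(\<integral>g. sigmoid_deriv (Wtilde U L \<theta> (sqrt s *\<^sub>R g) \<bullet> y) \<partial>std_gauss)
      = (\<integral>g. sigmoid_deriv (c + sqrt s * (g \<bullet> w)) \<partial>std_gauss)"
    by simp
  also have "\<dots> = (\<integral>x. sigmoid_deriv (c + sqrt s * (norm w * x)) \<partial>std_normal_distribution)"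
    by (rule integral_std_gauss_inner[where f="\<lambda>u. sigmoid_deriv (c + sqrt s * u)"]) simp
  also have "\<dots> = sd_avg c (s * quad_form L y)"
    unfolding sd_avg_def gauss_avg_def norm_w using assms
    by (simp add: real_sqrt_mult mult.assoc)
  finally show ?thesis unfolding c_def .
qed

lemma integral_G_summand:
  assumes "0 \<le> t"
  shows "(LINT s:{0..t}|lborel.
           (\<integral>g. sigmoid_deriv (Wtilde U L \<theta> (sqrt s *\<^sub>R g) \<bullet> y) \<partial>std_gauss) * ((L *v y) \<bullet> y))
       = sd_avg_int (Wtilde U L \<theta> 0 \<bullet> y) (t * quad_form L y)"
proof -
  define c where "c = Wtilde U L \<theta> 0 \<bullet> y"
  define q where "q = quad_form L y"
  have "(LINT s:{0..t}|lborel.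
           (\<integral>g. sigmoid_deriv (Wtilde U L \<theta> (sqrt s *\<^sub>R g) \<bullet> y) \<partial>std_gauss) * ((L *v y) \<bullet> y))
      = (LINT s:{0..t}|lborel. sd_avg c (s * q) * q)"
    by (rule set_lebesgue_integral_cong)
       (auto simp: integral_sigmoid_deriv_Wtilde c_def q_def quad_form_def)
  also have "\<dots> = integral {0..t} (\<lambda>s. sd_avg c (s * q) * q)"
  proof (rule set_borel_integral_eq_integral(2))
    have "continuous_on {0..t} (\<lambda>s. sd_avg c (s * q) * q)"
      by (intro continuous_intros continuous_on_compose2[OF continuous_on_sd_avg[of UNIV]]) auto
    then show "set_integrable lborel {0..t} (\<lambda>s. sd_avg c (s * q) * q)"
      unfolding set_integrable_def by (intro borel_integrable_compact) auto
  qed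
  also have "\<dots> = sd_avg_int c (t * q)"
    unfolding sd_avg_int_def q_def by (rule integral_stretch_atLeastAtMost[OF quad_form_nonneg])
  finally show ?thesis unfolding c_def q_def .
qed

lemma G_fun_eq_sum_sd_avg_int:
  fixes M :: "'a measure" and Z :: "'n::finite \<Rightarrow> 'a \<Rightarrow> real^'p"
  assumes "0 \<le> t"
  obtains C where "\<And>y. G_fun U L M Z t \<theta> y
    = (\<Sum>i\<in>UNIV. sd_avg_int (Wtilde U L \<theta> 0 \<bullet> y $ i) (t * quad_form L (y $ i))) / (2 * CARD('n)) - C"
  using integral_G_summand[OF assms] by (simp add: G_fun_def)

lemma abs_quad_form_increment_le:
  assumes "norm h < 1"
  shows "\<bar>2 * ((L *v v) \<bullet> h) + quad_form L h\<bar> \<le> (2 * norm (L *v v) + op_norm) * norm h"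
proof -
  have "(norm h)\<^sup>2 \<le> norm h"
    using assms by (simp add: power2_eq_square mult_left_le_one_le)
  then have "quad_form L h \<le> op_norm * norm h"
    using quad_form_le[of h] op_norm_nonneg by (meson mult_left_mono order_trans)
  then show ?thesis
    using quad_form_nonneg[of h] Cauchy_Schwarz_ineq2[of "L *v v" h] by (simp add: algebra_simps)
qed

lemma sd_avg_int_quad_form_remainder_degenerate:
  assumes "0 \<le> t" and "t * quad_form L v0 = 0"
  shows "\<bar>sd_avg_int (a \<bullet> (v0 + h)) (t * quad_form L (v0 + h)) - sd_avg_int (a \<bullet> v0) (t * quad_form L v0)
          - (sd2_avg_int (a \<bullet> v0) (t * quad_form L v0) *\<^sub>R a
             + (2 * t * sd_avg (a \<bullet> v0) (t * quad_form L v0)) *\<^sub>R (L *v v0)) \<bullet> h\<bar>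
         \<le> t * op_norm / 4 * (norm h)\<^sup>2"
proof -
  have "t *\<^sub>R (L *v v0) = 0"
  proof (cases "t = 0")
    case False
    then have "(norm (L *v v0))\<^sup>2 \<le> 0"
      using assms(2) norm_L_sq_le[of v0] by simp
    then show ?thesis by simp
  qed simp
  then have tL: "t * ((L *v v0) \<bullet> h) = 0" "(2 * t * c) *\<^sub>R (L *v v0) = 0" for c
    by (metis inner_scaleR_left inner_zero_left, metis scaleR_scaleR scaleR_zero_right mult.commute mult.assoc)
  have int0: "sd_avg_int c (t * quad_form L v0) = 0" "sd2_avg_int c (t * quad_form L v0) = 0" for c
    unfolding sd_avg_int_def sd2_avg_int_def assms(2) by simp_all
  have "t * quad_form L (v0 + h) = t * quad_form L v0 + 2 * (t * ((L *v v0) \<bullet> h)) + t * quad_form L h"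
    unfolding quad_form_add by (simp add: distrib_left mult.left_commute)
  then have "t * quad_form L (v0 + h) = t * quad_form L h"
    using assms(2) tL(1) by simp
  moreover have "\<bar>sd_avg_int c (t * quad_form L h)\<bar> \<le> t * op_norm / 4 * (norm h)\<^sup>2" for c
  proof -
    have "\<bar>sd_avg_int c (t * quad_form L h)\<bar> \<le> t * quad_form L h / 4"
      using assms(1) quad_form_nonneg by (intro abs_sd_avg_int_le) simp
    also have "\<dots> \<le> t * (op_norm * (norm h)\<^sup>2) / 4"
      using assms(1) quad_form_le by (simp add: mult_left_mono)
    finally show ?thesis by simp
  qed
  ultimately show ?thesis by (simp only: int0 tL scaleR_zero_left add_0 inner_zero_left diff_zero)
qed

lemma sd_avg_int_quad_form_remainder_nondegenerate:
  assumes "0 \<le> t" and T0: "0 < t * quad_form L v0" and "norm h < 1"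
  defines "M \<equiv> t * (2 * norm (L *v v0) + op_norm)"
  shows "\<bar>sd_avg_int (a \<bullet> (v0 + h)) (t * quad_form L (v0 + h)) - sd_avg_int (a \<bullet> v0) (t * quad_form L v0)
          - (sd2_avg_int (a \<bullet> v0) (t * quad_form L v0) *\<^sub>R a
             + (2 * t * sd_avg (a \<bullet> v0) (t * quad_form L v0)) *\<^sub>R (L *v v0)) \<bullet> h\<bar>
         \<le> (M\<^sup>2 / (4 * sqrt (t * quad_form L v0)) + M * norm a / 4
              + t * quad_form L v0 * (norm a)\<^sup>2 / 4 + t * op_norm / 4) * (norm h)\<^sup>2"
proof -
  define c0 T0 c T where "c0 = a \<bullet> v0" and "T0 = t * quad_form L v0"
    and "c = a \<bullet> (v0 + h)" and "T = t * quad_form L (v0 + h)"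
  have dc: "c - c0 = a \<bullet> h" unfolding c_def c0_def by (simp add: inner_add_right)
  have dT: "T - T0 = t * (2 * ((L *v v0) \<bullet> h) + quad_form L h)"
    unfolding T_def T0_def quad_form_add by (simp add: algebra_simps)
  have dc_le: "\<bar>c - c0\<bar> \<le> norm a * norm h"
    unfolding dc by (rule Cauchy_Schwarz_ineq2)
  have dT_le: "\<bar>T - T0\<bar> \<le> M * norm h"
    unfolding dT M_def abs_mult using abs_quad_form_increment_le[OF \<open>norm h < 1\<close>, of v0] \<open>0 \<le> t\<close>
    by (simp add: mult.assoc mult_left_mono)
  have "\<bar>T - T0\<bar>\<^sup>2 / (4 * sqrt T0) + \<bar>T - T0\<bar> * \<bar>c - c0\<bar> / 4 + T0 * \<bar>c - c0\<bar>\<^sup>2 / 4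
      \<le> (M * norm h)\<^sup>2 / (4 * sqrt T0) + (M * norm h) * (norm a * norm h) / 4 + T0 * (norm a * norm h)\<^sup>2 / 4"
    using dT_le dc_le T0 unfolding T0_def
    by (intro add_mono divide_right_mono mult_mono power_mono mult_left_mono) auto
  then have taylor: "\<bar>sd_avg_int c T - sd_avg_int c0 T0 - (c - c0) * sd2_avg_int c0 T0 - (T - T0) * sd_avg c0 T0\<bar>
      \<le> (M\<^sup>2 / (4 * sqrt T0) + M * norm a / 4 + T0 * (norm a)\<^sup>2 / 4) * (norm h)\<^sup>2"
    using sd_avg_int_taylor[of T0 T c c0] T0 quad_form_nonneg[of "v0 + h"] \<open>0 \<le> t\<close>
    unfolding T0_def T_def
    by (simp add: algebra_simps power2_eq_square)
  have "\<bar>sd_avg c0 T0 * (t * quad_form L h)\<bar> \<le> 1/4 * (t * (op_norm * (norm h)\<^sup>2))"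
    unfolding abs_mult using abs_sd_avg_le[of c0 T0] quad_form_nonneg[of h] quad_form_le[of h] \<open>0 \<le> t\<close>
    by (intro mult_mono) (auto intro: mult_left_mono)
  moreover have "sd_avg_int c T - sd_avg_int c0 T0
        - (sd2_avg_int c0 T0 *\<^sub>R a + (2 * t * sd_avg c0 T0) *\<^sub>R (L *v v0)) \<bullet> h
      = (sd_avg_int c T - sd_avg_int c0 T0 - (c - c0) * sd2_avg_int c0 T0 - (T - T0) * sd_avg c0 T0)
        + sd_avg c0 T0 * (t * quad_form L h)"
    unfolding dc dT by (simp add: algebra_simps)
  ultimately show ?thesis
    using taylor unfolding c_def c0_def T_def T0_def by (simp add: algebra_simps)
qed

lemma has_derivative_sd_avg_int_quad_form:
  assumes "0 \<le> t"
  shows "((\<lambda>v. sd_avg_int (a \<bullet> v) (t * quad_form L v)) has_derivative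
           (\<lambda>h. (sd2_avg_int (a \<bullet> v0) (t * quad_form L v0) *\<^sub>R a
                 + (2 * t * sd_avg (a \<bullet> v0) (t * quad_form L v0)) *\<^sub>R (L *v v0)) \<bullet> h)) (at v0)"
proof -
  have "0 \<le> t * quad_form L v0" using assms quad_form_nonneg by simp
  then consider "t * quad_form L v0 = 0" | "0 < t * quad_form L v0" by linarith
  then obtain C where "\<And>h. norm h < 1 \<Longrightarrow>
      \<bar>sd_avg_int (a \<bullet> (v0 + h)) (t * quad_form L (v0 + h)) - sd_avg_int (a \<bullet> v0) (t * quad_form L v0)
          - (sd2_avg_int (a \<bullet> v0) (t * quad_form L v0) *\<^sub>R a
             + (2 * t * sd_avg (a \<bullet> v0) (t * quad_form L v0)) *\<^sub>R (L *v v0)) \<bullet> h\<bar> \<le> C * (norm h)\<^sup>2"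
    by cases (use sd_avg_int_quad_form_remainder_degenerate[OF assms]
                  sd_avg_int_quad_form_remainder_nondegenerate[OF assms] in blast)+
  then show ?thesis
    by (intro has_derivative_if_remainder_quadratic[where C=C] bounded_linear_inner_right)
      (metis add.commute diff_add_cancel)
qed

lemma has_derivative_G_fun:
  fixes M :: "'a measure" and Z :: "'n::finite \<Rightarrow> 'a \<Rightarrow> real^'p"
  assumes "0 \<le> t"
  shows "(G_fun U L M Z t \<theta> has_derivative (\<lambda>h. G_grad U L t \<theta> z \<bullet> h)) (at z)"
proof -
  define a where "a = Wtilde U L \<theta> 0"
  define g where "g i = sd2_avg_int (a \<bullet> z $ i) (t * quad_form L (z $ i)) *\<^sub>R a
      + (2 * t * sd_avg (a \<bullet> z $ i) (t * quad_form L (z $ i))) *\<^sub>R (L *v z $ i)" for i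
  obtain C where G: "\<And>y. G_fun U L M Z t \<theta> y
    = (\<Sum>i\<in>UNIV. sd_avg_int (a \<bullet> y $ i) (t * quad_form L (y $ i))) / (2 * CARD('n)) - C"
    using G_fun_eq_sum_sd_avg_int[OF assms] unfolding a_def by blast
  have "((\<lambda>y. sd_avg_int (a \<bullet> y $ i) (t * quad_form L (y $ i))) has_derivative (\<lambda>h. g i \<bullet> h $ i)) (at z)"
    for i
    using has_derivative_compose[OF bounded_linear_imp_has_derivative[OF bounded_linear_vec_nth[of i]]
        has_derivative_sd_avg_int_quad_form[OF assms, of a "z $ i"]]
    unfolding g_def .
  then have D: "(G_fun U L M Z t \<theta> has_derivative
      (\<lambda>h. (\<Sum>i\<in>UNIV. g i \<bullet> h $ i) * inverse (2 * CARD('n)) - 0)) (at z)"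
    unfolding G[abs_def] divide_inverse
    by (intro has_derivative_diff has_derivative_mult_left has_derivative_sum has_derivative_const)
  have grad_inner: "(\<Sum>i\<in>UNIV. g i \<bullet> h $ i) * inverse (2 * CARD('n)) - 0 = G_grad U L t \<theta> z \<bullet> h" for h
  proof -
    have "G_grad U L t \<theta> z = (\<chi> i. g i /\<^sub>R (2 * CARD('n)))"
      unfolding G_grad_def g_def a_def ..
    then have "G_grad U L t \<theta> z \<bullet> h = (\<Sum>i\<in>UNIV. (g i \<bullet> h $ i) * inverse (2 * CARD('n)))"
      unfolding inner_vec_def[of "G_grad U L t \<theta> z"] by (simp add: mult.commute)
    then show ?thesis by (simp add: sum_distrib_right)
  qed
  show ?thesis using D unfolding grad_inner .
qed

lemma abs_sd2_avg_int_mult_norm_Wtilde_le: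
  assumes "0 \<le> t"
  shows "\<bar>sd2_avg_int c (t * quad_form L y)\<bar> * norm (Wtilde U L \<theta> 0)
    \<le> sqrt (op_norm * t / (2 * pi)) * norm \<theta> * sqrt (quad_form L y)"
proof -
  have "\<bar>sd2_avg_int c (t * quad_form L y)\<bar> \<le> sqrt (t * quad_form L y) / sqrt (2 * pi)"
    using assms quad_form_nonneg by (intro abs_sd2_avg_int_le) simp
  then have "\<bar>sd2_avg_int c (t * quad_form L y)\<bar> * norm (Wtilde U L \<theta> 0)
      \<le> sqrt (t * quad_form L y) / sqrt (2 * pi) * (sqrt op_norm * norm \<theta>)"
    using norm_Wtilde_0_le by (intro mult_mono) auto
  also have "\<dots> = sqrt (op_norm * t / (2 * pi)) * norm \<theta> * sqrt (quad_form L y)"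
    using assms quad_form_nonneg op_norm_nonneg by (simp add: real_sqrt_mult real_sqrt_divide)
  finally show ?thesis .
qed

lemma sd_avg_mult_norm_L_le:
  assumes "0 < t"
  shows "t * \<bar>sd_avg c (t * quad_form L y)\<bar> * norm (L *v y) \<le> sqrt (op_norm * t / (2 * pi))"
proof (cases "quad_form L y = 0")
  case True
  then show ?thesis using norm_L_le_sqrt_quad_form[of y] op_norm_nonneg assms by simp
next
  case False
  then have "0 < t * quad_form L y" using quad_form_nonneg[of y] assms by simp
  then have "t * \<bar>sd_avg c (t * quad_form L y)\<bar> * norm (L *v y)
      \<le> t * (1 / (sqrt (t * quad_form L y) * sqrt (2 * pi))) * (sqrt op_norm * sqrt (quad_form L y))"
    using abs_sd_avg_le_inverse_sqrt norm_L_le_sqrt_quad_form assms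
    by (intro mult_mono mult_left_mono) auto
  also have "\<dots> = sqrt (op_norm * t / (2 * pi))"
    using False assms quad_form_nonneg[of y] op_norm_nonneg
    by (simp add: real_sqrt_mult real_sqrt_divide field_simps)
  finally show ?thesis .
qed

lemma norm_G_grad_component_le:
  fixes z :: "real^'p^'n::finite"
  assumes "0 < t" and "norm \<theta> \<le> R"
  defines "\<rho> \<equiv> sqrt (op_norm * t / (2 * pi))"
  shows "norm (G_grad U L t \<theta> z $ i)
    \<le> R * \<rho> / (2 * real CARD('n)) * sqrt (quad_form L (z $ i)) + \<rho> / real CARD('n)"
proof -
  define a where "a = Wtilde U L \<theta> 0"
  define q where "q = quad_form L (z $ i)"
  define c where "c = a \<bullet> z $ i"
  have "\<bar>sd2_avg_int c (t * q)\<bar> * norm a \<le> \<rho> * norm \<theta> * sqrt q"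
    unfolding a_def q_def \<rho>_def using assms(1) by (intro abs_sd2_avg_int_mult_norm_Wtilde_le) simp
  also have "\<dots> \<le> \<rho> * R * sqrt q"
    unfolding \<rho>_def q_def using assms op_norm_nonneg quad_form_nonneg
    by (intro mult_right_mono mult_left_mono) auto
  finally have first: "\<bar>sd2_avg_int c (t * q)\<bar> * norm a \<le> \<rho> * R * sqrt q" .
  have second: "\<bar>2 * t * sd_avg c (t * q)\<bar> * norm (L *v z $ i) \<le> 2 * \<rho>"
    using sd_avg_mult_norm_L_le[OF assms(1), of c "z $ i"] assms(1)
    unfolding \<rho>_def q_def by (simp add: abs_mult)
  have "norm (G_grad U L t \<theta> z $ i)
      = norm (sd2_avg_int c (t * q) *\<^sub>R a + (2 * t * sd_avg c (t * q)) *\<^sub>R (L *v z $ i)) / (2 * CARD('n))"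
    unfolding G_grad_def a_def c_def q_def by simp (simp add: field_simps)
  also have "\<dots> \<le> (\<rho> * R * sqrt q + 2 * \<rho>) / (2 * CARD('n))"
  proof (rule divide_right_mono)
    show "norm (sd2_avg_int c (t * q) *\<^sub>R a + (2 * t * sd_avg c (t * q)) *\<^sub>R (L *v z $ i))
        \<le> \<rho> * R * sqrt q + 2 * \<rho>"
      using norm_triangle_ineq[of "sd2_avg_int c (t * q) *\<^sub>R a" "(2 * t * sd_avg c (t * q)) *\<^sub>R (L *v z $ i)"]
        first second by simp
  qed simp
  finally show ?thesis unfolding q_def by (simp add: add_divide_distrib mult_ac)
qed

lemma norm_G_grad_le:
  fixes z :: "real^'p^'n::finite"
  assumes "0 < t" and "norm \<theta> \<le> R"
  shows "norm (G_grad U L t \<theta> z)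
    \<le> sqrt (2 * t * op_norm / (pi * real CARD('n)))
       * (4 + sqrt (R\<^sup>2 / (16 * real CARD('n)) * (\<Sum>i\<in>UNIV. quad_form L (z $ i))))"
proof -
  define \<rho> where "\<rho> = sqrt (op_norm * t / (2 * pi))"
  define n where "n = real CARD('n)"
  define S where "S = (\<Sum>i\<in>UNIV. quad_form L (z $ i))"
  have "0 < n" unfolding n_def by simp
  have "0 \<le> R" using assms(2) norm_ge_zero[of \<theta>] by linarith
  have "0 \<le> \<rho>" unfolding \<rho>_def using assms(1) op_norm_nonneg by simp
  have "norm (G_grad U L t \<theta> z) \<le> R * \<rho> / (2 * n) * sqrt S + sqrt n * (\<rho> / n)"
    unfolding S_def n_def
  proof (rule norm_vec_le_sqrt_sum)
    show "norm (G_grad U L t \<theta> z $ i) \<le> R * \<rho> / (2 * real CARD('n)) * sqrt (quad_form L (z $ i)) + \<rho> / CARD('n)"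
      for i unfolding \<rho>_def by (rule norm_G_grad_component_le[OF assms])
  qed (use quad_form_nonneg \<open>0 \<le> R\<close> \<open>0 \<le> \<rho>\<close> in auto)
  also have "\<dots> = 2 * \<rho> / sqrt n * (R / (4 * sqrt n) * sqrt S) + \<rho> / sqrt n"
  proof -
    have "sqrt n * sqrt n = n" using \<open>0 < n\<close> by simp
    then show ?thesis using \<open>0 < n\<close> by (simp add: field_simps)
  qed
  also have "\<dots> \<le> 2 * \<rho> / sqrt n * (4 + sqrt (R\<^sup>2 / (16 * n) * S))"
  proof -
    have "sqrt (R\<^sup>2 / (16 * n) * S) = R / (4 * sqrt n) * sqrt S"
      using \<open>0 \<le> R\<close> \<open>0 < n\<close> by (simp add: real_sqrt_mult real_sqrt_divide)
    moreover have "\<rho> / sqrt n \<le> 2 * \<rho> / sqrt n * 4"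
      using \<open>0 \<le> \<rho>\<close> \<open>0 < n\<close> by (simp add: field_simps)
    ultimately show ?thesis by (simp add: distrib_left)
  qed
  also have "2 * \<rho> / sqrt n = sqrt (2 * t * op_norm / (pi * n))"
  proof -
    have "4 * (op_norm * t / (2 * pi)) = 2 * t * op_norm / pi" by simp
    then have "2 * \<rho> = sqrt (2 * t * op_norm / pi)"
      unfolding \<rho>_def using real_sqrt_mult[of 4 "op_norm * t / (2 * pi)"] by (simp add: mult.assoc)
    then show ?thesis by (simp add: real_sqrt_divide real_sqrt_mult)
  qed
  finally show ?thesis unfolding n_def S_def .
qed

end

theorem lemma3:
  fixes U L :: "real^'p::finite^'p"
    and M :: "'a measure"
    and Z :: "'n::finite \<Rightarrow> 'a \<Rightarrow> real^'p"
    and R K t :: real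
    and \<theta> :: "real^'p"
    and z :: "real^'p^'n"
  assumes U_orth: "orthogonal_matrix U"
    and L_diag: "\<forall>i j. i \<noteq> j \<longrightarrow> L $ i $ j = 0"
    and L_psd: "\<forall>i. L $ i $ i \<ge> 0"
    and R_nonneg: "R \<ge> 0"
    and M_prob: "prob_space M"
    and Z_meas: "\<forall>i. Z i \<in> borel_measurable M"
    and Z_indep: "prob_space.indep_vars M (\<lambda>_. borel) Z UNIV"
    and Z_ident: "\<forall>i j. distr M borel (Z i) = distr M borel (Z j)"
    and Z_second_moment: "\<forall>i j k. integrable M (\<lambda>\<omega>. Z i \<omega> $ j * Z i \<omega> $ k) \<and>
                     (\<integral>\<omega>. Z i \<omega> $ j * Z i \<omega> $ k \<partial>M) = (if j = k then 1 else 0)"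
    and K_pos: "K > 0"
    and Z_conc: "concentration_property M (\<lambda>\<omega>. (\<chi> i. Z i \<omega>) :: real^'p^'n) K"
    and t_pos: "t > 0"
    and theta_ball: "norm \<theta> \<le> R"
  shows "\<exists>g :: real^'p^'n.
           ((\<lambda>y. G_fun U L M Z t \<theta> y) has_derivative (\<lambda>h. g \<bullet> h)) (at z) \<and>
           norm g \<le> sqrt (2 * t * onorm (\<lambda>x. (U ** L ** transpose U) *v x) / (pi * real CARD('n)))
                    * (4 + sqrt (R\<^sup>2 / (16 * real CARD('n)) * (\<Sum>i\<in>UNIV. (L *v z $ i) \<bullet> z $ i)))"
proof -
  interpret eigendecomposition U L
    using U_orth L_diag L_psd by unfold_locales
  have "(G_fun U L M Z t \<theta> has_derivative (\<lambda>h. G_grad U L t \<theta> z \<bullet> h)) (at z)"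
    using t_pos by (intro has_derivative_G_fun) simp
  moreover have "norm (G_grad U L t \<theta> z)
      \<le> sqrt (2 * t * onorm (\<lambda>x. (U ** L ** transpose U) *v x) / (pi * real CARD('n)))
         * (4 + sqrt (R\<^sup>2 / (16 * real CARD('n)) * (\<Sum>i\<in>UNIV. (L *v z $ i) \<bullet> z $ i)))"
    using norm_G_grad_le[OF t_pos theta_ball] unfolding op_norm_def quad_form_def .
  ultimately show ?thesis by blast
qed

end
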